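(* Consider the spectral triple $(C^\infty(S^2_q),\ell^2(\mathbb{Z}_+)\oplus\ell^2(\mathbb{Z}_+),D')$ and let $B$ be the algebra generated by $C^\infty(S^2_q)$ and the commutators $[D',x]$, $x\in C^\infty(S^2_q)$ (so $B\subset A^\infty\otimes\mathrm{Mat}_2(\mathbb{C})$). For $T\in B$ let $\zeta_T(s)=\mathrm{Trace}_{\ell^2(\mathbb{Z}_+)\oplus\ell^2(\mathbb{Z}_+)}(T|D'|^{-s})$. Then the dimension spectrum of the triple is $\{1\}$, and for all $T\in B$, $$\mathrm{Res}_{s=1}\zeta_T(s)=\frac{1}{2\pi}\int_{S^1}\mathrm{Trace}_{\mathbb{C}^2}\tilde\rho(T)\,\mathrm{d}\theta,$$ where $\tilde\rho=\sigma\otimes\mathrm{id}:A^\infty\otimes\mathrm{Mat}_2(\mathbb{C})\to C^\infty(S^1)\otimes\mathrm{Mat}_2(\mathbb{C})$.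
   Context: $\mathbb{N}=\{0,1,2,\dots\}$, $\mathbb{Z}_+=\{1,2,\dots\}$. On $\ell^2(\mathbb{Z}_+)$ with orthonormal basis $\{|n\rangle\}$, $N|n\rangle=n|n\rangle$, $w|n\rangle=|n+1\rangle$. $A^\infty$ is the $*$-algebra of operators $f=\sum_{n\in\mathbb{N}}(f_nw^n+f_{-n-1}(w^* )^{n+1})+\sum_{j,k\in\mathbb{N}}f_{jk}w^j(1-ww^* )(w^* )^k$ with $\{f_n\}_{n\in\mathbb{Z}}$ a rapid decay sequence and $\{f_{jk}\}$ a rapid decay matrix, and $\sigma(f)(\theta)=\sum_nf_ne^{in\theta}$. $C^\infty(S^2_q)=\{(x,y)\in A^\infty\oplus A^\infty:\sigma(x)=\sigma(y)\}$ acting diagonally on $\ell^2(\mathbb{Z}_+)\oplus\ell^2(\mathbb{Z}_+)\cong\ell^2(\mathbb{Z}_+)\otimes\mathbb{C}^2$, and $D'=N\otimes\begin{pmatrix}0&1\\1&0\end{pmatrix}$, so $|D'|=N\otimes\mathrm{id}$. With $\delta=[|D'|,\cdot]$, the triple has dimension spectrum $\Sigma$ if $\Sigma$ is countable and for every $T\in\bigcup_j\delta^j(C^\infty(S^2_q)\cup[D',C^\infty(S^2_q)])$, $\zeta_T$ extends meromorphically to $\mathbb{C}$ with poles only in $\Sigma$ ($\Sigma$ minimal). *)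

theory Defs
  imports "HOL-Complex_Analysis.Complex_Analysis"
begin

text \<open>Operators on l2(Z_+) are represented by their matrices w.r.t. the basis |n>, n >= 1;
  the natural number k indexes the basis vector |k+1>.  So op k l = <k+1| op |l+1>.\<close>

type_synonym op1 = "nat \<Rightarrow> nat \<Rightarrow> complex"

text \<open>Operators on l2(Z_+) (x) C^2: index (k, a) with a = False / True the first / second summand.\<close>

type_synonym op2 = "nat \<times> bool \<Rightarrow> nat \<times> bool \<Rightarrow> complex"

definition rapid_decay_seq :: "(int \<Rightarrow> complex) \<Rightarrow> bool" where
  "rapid_decay_seq g \<longleftrightarrow> (\<forall>p::nat. \<exists>C. \<forall>n. (1 + real_of_int \<bar>n\<bar>) ^ p * norm (g n) \<le> C)"

definition rapid_decay_mat :: "(nat \<Rightarrow> nat \<Rightarrow> complex) \<Rightarrow> bool" where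
  "rapid_decay_mat h \<longleftrightarrow> (\<forall>p::nat. \<exists>C. \<forall>j k. (1 + real j + real k) ^ p * norm (h j k) \<le> C)"

text \<open>Matrix of sum_n (f_n w^n + f_(-n-1) w*^(n+1)) + sum_jk f_jk w^j (1 - w w*) w*^k :
  <a+1| w^n |b+1> = [a = b + n],  <a+1| w*^(n+1) |b+1> = [b = a + n + 1],
  <a+1| w^j (1 - w w*) w*^k |b+1> = [a = j][b = k].\<close>

definition toep_op :: "(int \<Rightarrow> complex) \<Rightarrow> (nat \<Rightarrow> nat \<Rightarrow> complex) \<Rightarrow> op1" where
  "toep_op g h = (\<lambda>a b. g (int a - int b) + h a b)"

definition Ainf :: "op1 set" where
  "Ainf = {toep_op g h | g h. rapid_decay_seq g \<and> rapid_decay_mat h}"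

text \<open>The Toeplitz coefficients {f_n} of an element of A^infinity (uniquely determined).\<close>

definition symb_coeffs :: "op1 \<Rightarrow> int \<Rightarrow> complex" where
  "symb_coeffs f = (THE g. \<exists>h. rapid_decay_seq g \<and> rapid_decay_mat h \<and> f = toep_op g h)"

definition sigma :: "op1 \<Rightarrow> real \<Rightarrow> complex" where
  "sigma f \<theta> = (\<Sum>\<^sub>\<infinity>n\<in>(UNIV::int set). symb_coeffs f n * cis (of_int n * \<theta>))"

definition diag_op :: "op1 \<Rightarrow> op1 \<Rightarrow> op2" where
  "diag_op x y = (\<lambda>(m, a) (n, b). if a = b then (if a then y m n else x m n) else 0)"

definition CS2q :: "op2 set" where
  "CS2q = {diag_op x y | x y. x \<in> Ainf \<and> y \<in> Ainf \<and> sigma x = sigma y}"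

text \<open>D' = N (x) [[0,1],[1,0]] and |D'| = N (x) id.\<close>

definition Dp :: op2 where
  "Dp = (\<lambda>(m, a) (n, b). if m = n \<and> a \<noteq> b then of_nat (Suc m) else 0)"

definition absDp :: op2 where
  "absDp = (\<lambda>(m, a) (n, b). if m = n \<and> a = b then of_nat (Suc m) else 0)"

definition opmul :: "op2 \<Rightarrow> op2 \<Rightarrow> op2" where
  "opmul A B = (\<lambda>i j. \<Sum>\<^sub>\<infinity>k\<in>UNIV. A i k * B k j)"

definition opcomm :: "op2 \<Rightarrow> op2 \<Rightarrow> op2" where
  "opcomm A B = (\<lambda>i j. opmul A B i j - opmul B A i j)"

definition delta :: "op2 \<Rightarrow> op2" where
  "delta T = opcomm absDp T"

inductive_set alg_gen :: "op2 set \<Rightarrow> op2 set" for G where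
  gen: "T \<in> G \<Longrightarrow> T \<in> alg_gen G"
| add: "S \<in> alg_gen G \<Longrightarrow> T \<in> alg_gen G \<Longrightarrow> (\<lambda>i j. S i j + T i j) \<in> alg_gen G"
| smult: "T \<in> alg_gen G \<Longrightarrow> (\<lambda>i j. c * T i j) \<in> alg_gen G"
| mult: "S \<in> alg_gen G \<Longrightarrow> T \<in> alg_gen G \<Longrightarrow> opmul S T \<in> alg_gen G"

definition Balg :: "op2 set" where
  "Balg = alg_gen (CS2q \<union> opcomm Dp ` CS2q)"

text \<open>zeta_T(s) = Trace(T |D'|^(-s)) (defined where the trace series converges, Re s > 1).\<close>

definition zeta_op :: "op2 \<Rightarrow> complex \<Rightarrow> complex" where
  "zeta_op T s = (\<Sum>\<^sub>\<infinity>(k, a)\<in>UNIV. T (k, a) (k, a) * (of_nat (Suc k)) powr (- s))"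

definition mero_ext_poles_in :: "op2 \<Rightarrow> (complex \<Rightarrow> complex) \<Rightarrow> complex set \<Rightarrow> bool" where
  "mero_ext_poles_in T F S \<longleftrightarrow>
     F meromorphic_on UNIV \<and> (\<forall>s. 1 < Re s \<longrightarrow> F s = zeta_op T s) \<and>
     (\<forall>z. z \<notin> S \<longrightarrow> F analytic_on {z})"

definition DSops :: "op2 set" where
  "DSops = (\<Union>j. (delta ^^ j) ` (CS2q \<union> opcomm Dp ` CS2q))"

definition dim_spec_admissible :: "complex set \<Rightarrow> bool" where
  "dim_spec_admissible S \<longleftrightarrow> countable S \<and> (\<forall>T\<in>DSops. \<exists>F. mero_ext_poles_in T F S)"

definition is_dimension_spectrum :: "complex set \<Rightarrow> bool" where
  "is_dimension_spectrum S \<longleftrightarrow> dim_spec_admissible S \<and> (\<forall>S'. dim_spec_admissible S' \<longrightarrow> S \<subseteq> S')"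

definition block :: "op2 \<Rightarrow> bool \<Rightarrow> bool \<Rightarrow> op1" where
  "block T a b = (\<lambda>m n. T (m, a) (n, b))"

text \<open>Trace_{C^2} of (sigma (x) id)(T) at theta.\<close>

definition tr_symb :: "op2 \<Rightarrow> real \<Rightarrow> complex" where
  "tr_symb T \<theta> = sigma (block T False False) \<theta> + sigma (block T True True) \<theta>"

end

(*
  For T in B the diagonal blocks lie in A^infinity, so along the diagonal of T the two blocks
  contribute f_0 + (rapidly decaying terms) and g_0 + (rapidly decaying terms), where f_0, g_0 are
  the zeroth Toeplitz coefficients of the blocks.  Hence zeta_T(s) = (f_0 + g_0) zeta(s) + (entire Dirichlet series), and
  since (s - 1) zeta(s) extends to an entire function with value 1 at s = 1, zeta_T is meromorphic
  with at most a simple pole at 1, of residue f_0 + g_0 = (1 / 2 pi) * integral of tr sigma(T).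
  The operators delta^j(x) (j >= 1) and [D', x] have zero diagonal, so their zeta functions vanish;
  the identity gives 2 zeta, so the pole at 1 is forced and the dimension spectrum is {1}.

  The continuation of zeta comes from telescoping sum_n ((n + 1)^(1-s) - (n + 2)^(1-s)) = 1 and
  expanding (n + 2)^(1-s) binomially around n + 1.  That A^infinity is an algebra, needed to
  reach all of B, follows from Peetre's inequality for the polynomial weights (1 + x)^-p.
*)
theory Submission
  imports Defs "HOL-Library.Nat_Bijection"
begin

lemma holomorphic_on_suminf_locally_dominated:
  fixes f :: "nat \<Rightarrow> complex \<Rightarrow> complex"
  assumes S: "open S" and hol: "\<And>n. f n holomorphic_on S"
    and dom: "\<And>x. x \<in> S \<Longrightarrow> \<exists>d h. 0 < d \<and> summable h \<and>
                (\<forall>\<^sub>F n in sequentially. \<forall>y\<in>ball x d \<inter> S. norm (f n y) \<le> h n)"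
  shows "(\<lambda>s. \<Sum>n. f n s) holomorphic_on S" and "x \<in> S \<Longrightarrow> summable (\<lambda>n. f n x)"
proof -
  have "\<And>n x. x \<in> S \<Longrightarrow> (f n has_field_derivative deriv (f n) x) (at x)"
    using hol S by (meson holomorphic_derivI)
  then obtain g g' where g: "\<forall>x \<in> S. ((\<lambda>n. f n x) sums g x) \<and> ((\<lambda>n. deriv (f n) x) sums g' x) \<and>
                                       (g has_field_derivative g' x) (at x)"
    using series_and_derivative_comparison_local[OF S _ dom] by metis
  have "g holomorphic_on S"
    using g S by (auto simp: holomorphic_on_open)
  then show "(\<lambda>s. \<Sum>n. f n s) holomorphic_on S"
    by (rule holomorphic_transform) (use g in \<open>auto simp: sums_unique\<close>)
  show "x \<in> S \<Longrightarrow> summable (\<lambda>n. f n x)"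
    using g sums_summable by blast
qed

lemma summable_Suc_powr: "p < -1 \<Longrightarrow> summable (\<lambda>n. real (Suc n) powr p)"
  using summable_real_powr_iff[of p] summable_Suc_iff[of "\<lambda>n. real n powr p"] by simp

lemma norm_of_nat_Suc_powr: "norm (of_nat (Suc n) powr z :: complex) = real (Suc n) powr Re z"
  by (subst norm_powr_real_powr) auto

lemma nonneg_bound_coeff:
  fixes x :: "'a::real_normed_vector"
  shows "norm x \<le> C * w \<Longrightarrow> 0 < w \<Longrightarrow> 0 \<le> C"
  by (metis norm_ge_zero order_trans zero_le_mult_iff not_le)

lemma locally_dominated_halfplane:
  fixes f :: "nat \<Rightarrow> complex \<Rightarrow> complex"
  assumes bound: "\<And>R. \<exists>C N. \<forall>n\<ge>N. \<forall>s. \<sigma> < Re s \<longrightarrow> norm s \<le> R \<longrightarrow>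
                   norm (f n s) \<le> C * real (Suc n) powr (\<sigma> - 1 - Re s)"
    and x: "\<sigma> < Re x"
  shows "\<exists>d h. 0 < d \<and> summable h \<and>
           (\<forall>\<^sub>F n in sequentially. \<forall>y\<in>ball x d \<inter> {s. \<sigma> < Re s}. norm (f n y) \<le> h n)"
proof -
  define d where "d = (Re x - \<sigma>) / 2"
  have d: "0 < d" using x by (simp add: d_def)
  obtain C N where CN: "\<And>n s. N \<le> n \<Longrightarrow> \<sigma> < Re s \<Longrightarrow> norm s \<le> norm x + d \<Longrightarrow>
                         norm (f n s) \<le> C * real (Suc n) powr (\<sigma> - 1 - Re s)"
    using bound[of "norm x + d"] by blast
  have C: "0 \<le> C"
    using CN[of N x] x d by (intro nonneg_bound_coeff[of "f N x" _ "real (Suc N) powr _"]) auto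
  have dom: "norm (f n y) \<le> C * real (Suc n) powr (- 1 - d)"
    if n: "N \<le> n" and y: "y \<in> ball x d \<inter> {s. \<sigma> < Re s}" for n y
  proof -
    have xy: "norm (x - y) < d" using y by (simp add: dist_norm)
    then have "Re x - d \<le> Re y" using complex_Re_le_cmod[of "x - y"] by simp
    then have "\<sigma> - 1 - Re y \<le> - 1 - d" by (simp add: d_def field_simps)
    moreover have "norm y \<le> norm x + d" using xy norm_triangle_ineq3[of x y] by linarith
    ultimately have "C * real (Suc n) powr (\<sigma> - 1 - Re y) \<le> C * real (Suc n) powr (- 1 - d)"
      using C by (intro mult_left_mono powr_mono) auto
    moreover have "norm (f n y) \<le> C * real (Suc n) powr (\<sigma> - 1 - Re y)"
      using CN[OF n] y \<open>norm y \<le> norm x + d\<close> by simp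
    ultimately show ?thesis by linarith
  qed
  have "summable (\<lambda>n. C * real (Suc n) powr (- 1 - d))"
    using d by (intro summable_mult summable_Suc_powr) simp
  moreover have "\<forall>\<^sub>F n in sequentially. \<forall>y\<in>ball x d \<inter> {s. \<sigma> < Re s}.
                   norm (f n y) \<le> C * real (Suc n) powr (- 1 - d)"
    unfolding eventually_sequentially using dom by blast
  ultimately show ?thesis
    using d by blast
qed

lemma holomorphic_on_suminf_halfplane:
  fixes f :: "nat \<Rightarrow> complex \<Rightarrow> complex"
  assumes hol: "\<And>n. f n holomorphic_on {s. \<sigma> < Re s}"
    and bound: "\<And>R. \<exists>C N. \<forall>n\<ge>N. \<forall>s. \<sigma> < Re s \<longrightarrow> norm s \<le> R \<longrightarrow>
                   norm (f n s) \<le> C * real (Suc n) powr (\<sigma> - 1 - Re s)"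
  shows "(\<lambda>s. \<Sum>n. f n s) holomorphic_on {s. \<sigma> < Re s}"
    and "\<sigma> < Re s \<Longrightarrow> summable (\<lambda>n. f n s)"
  using holomorphic_on_suminf_locally_dominated[OF open_halfspace_Re_gt hol locally_dominated_halfplane[OF bound]]
  by auto

section \<open>Analytic continuation of the Riemann zeta function\<close>

lemma norm_gchoose_le:
  fixes a :: complex
  shows "norm (a gchoose k) \<le> (norm a + 1) ^ k"
proof (induction k)
  case 0
  then show ?case by simp
next
  case (Suc k)
  have "norm (a - of_nat k) \<le> norm a + real k"
    by (metis norm_of_nat norm_triangle_ineq4)
  also have "\<dots> \<le> (norm a + 1) * (real k + 1)"
    by (simp add: algebra_simps)
  finally have "norm ((a - of_nat k) / (of_nat k + 1)) \<le> norm a + 1"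
    by (simp add: norm_divide divide_le_eq add_pos_nonneg)
       (metis of_nat_Suc norm_of_nat add.commute)
  then have "norm (a gchoose k) * norm ((a - of_nat k) / (of_nat k + 1)) \<le> (norm a + 1) ^ k * (norm a + 1)"
    by (intro mult_mono Suc) auto
  moreover have "norm (a gchoose Suc k) = norm (a gchoose k) * norm ((a - of_nat k) / (of_nat k + 1))"
    by (simp add: gbinomial_Suc_rec norm_mult norm_divide)
  ultimately show ?case
    by (simp add: mult.commute)
qed

definition binomial_tail :: "nat \<Rightarrow> complex \<Rightarrow> nat \<Rightarrow> complex" where
  "binomial_tail K s n = of_nat (n + 2) powr (1 - s) -
     (\<Sum>k\<le>K. ((1 - s) gchoose k) * of_nat (Suc n) powr (1 - s - of_nat k))"

lemma binomial_tail_sums: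
  assumes "0 < n"
  shows "(\<lambda>i. ((1 - s) gchoose (i + Suc K)) * of_nat (Suc n) powr (1 - s - of_nat (i + Suc K)))
     sums binomial_tail K s n"
proof -
  define t where "t k = ((1 - s) gchoose k) * of_nat (Suc n) powr (1 - s - of_nat k)" for k
  have "t sums (of_nat (n + 2) powr (1 - s))"
    using gen_binomial_complex'[of 1 "real (Suc n)" "1 - s"] assms by (simp add: t_def[abs_def] add.commute)
  then have "(\<lambda>i. t (i + Suc K)) sums (of_nat (n + 2) powr (1 - s) - sum t {..<Suc K})"
    by (subst sums_iff_shift')
  then show ?thesis
    by (simp add: t_def binomial_tail_def lessThan_Suc_atMost)
qed

lemma norm_binomial_term_le:
  "norm (((1 - s) gchoose (i + Suc K)) * of_nat (Suc n) powr (1 - s - of_nat (i + Suc K)))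
     \<le> (norm (1 - s) + 1) ^ Suc K * real (Suc n) powr (- Re s - real K) * ((norm (1 - s) + 1) / real (Suc n)) ^ i"
proof -
  define B where "B = norm (1 - s) + 1"
  define y where "y = real (Suc n)"
  have y: "0 < y" by (simp add: y_def)
  have "norm (of_nat (Suc n) powr (1 - s - of_nat (i + Suc K)) :: complex) = y powr ((- Re s - real K) - real i)"
    unfolding norm_of_nat_Suc_powr y_def by (simp add: algebra_simps)
  also have "\<dots> = y powr (- Re s - real K) / y ^ i"
    using y by (simp add: powr_diff powr_realpow)
  finally have "norm (((1 - s) gchoose (i + Suc K)) * of_nat (Suc n) powr (1 - s - of_nat (i + Suc K)))
                  = norm ((1 - s) gchoose (i + Suc K)) * (y powr (- Re s - real K) / y ^ i)"
    by (simp only: norm_mult)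
  also have "\<dots> \<le> B ^ (i + Suc K) * (y powr (- Re s - real K) / y ^ i)"
    using y unfolding B_def by (intro mult_right_mono norm_gchoose_le) auto
  also have "\<dots> = B ^ Suc K * y powr (- Re s - real K) * (B / y) ^ i"
    by (simp add: power_add power_divide mult_ac)
  finally show ?thesis
    by (simp only: B_def y_def)
qed

lemma norm_binomial_tail_le:
  assumes n: "2 * (norm (1 - s) + 1) \<le> real (Suc n)"
  shows "norm (binomial_tail K s n) \<le> 2 * (norm (1 - s) + 1) ^ Suc K * real (Suc n) powr (- Re s - real K)"
proof -
  define B where "B = norm (1 - s) + 1"
  define Y where "Y = real (Suc n) powr (- Re s - real K)"
  have B: "1 \<le> B" by (simp add: B_def)
  have "2 * B \<le> real (Suc n)" using n by (simp add: B_def)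
  then have q: "B / real (Suc n) \<le> 1 / 2" "norm (B / real (Suc n)) < 1" and "0 < n"
    using B by (simp_all add: pos_divide_le_eq)
  have "summable (\<lambda>i. B ^ Suc K * Y * (B / real (Suc n)) ^ i)"
    using q by (intro summable_mult summable_geometric)
  then have "norm (binomial_tail K s n) \<le> (\<Sum>i. B ^ Suc K * Y * (B / real (Suc n)) ^ i)"
    unfolding sums_unique[OF binomial_tail_sums[OF \<open>0 < n\<close>]] B_def Y_def
    by (rule norm_suminf_le[OF norm_binomial_term_le])
  also have "\<dots> = B ^ Suc K * Y * (1 / (1 - B / real (Suc n)))"
    using q by (simp add: suminf_mult suminf_geometric summable_geometric)
  also have "\<dots> \<le> B ^ Suc K * Y * 2"
    using q B by (intro mult_left_mono) (auto simp: Y_def divide_le_eq)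
  finally show ?thesis
    by (simp add: B_def Y_def mult_ac)
qed

lemma binomial_tail_holomorphic: "(\<lambda>s. binomial_tail K s n) holomorphic_on S"
  unfolding binomial_tail_def gbinomial_altdef_of_nat
  by (intro holomorphic_intros holomorphic_on_prod) auto

definition binomial_tail_sum :: "nat \<Rightarrow> complex \<Rightarrow> complex" where
  "binomial_tail_sum K s = (\<Sum>n. binomial_tail K s n)"

lemma
  shows binomial_tail_sum_holomorphic: "binomial_tail_sum K holomorphic_on {s. 1 - real K < Re s}"
    and summable_binomial_tail: "1 - real K < Re s \<Longrightarrow> summable (\<lambda>n. binomial_tail K s n)"
proof -
  have "\<exists>C N. \<forall>n\<ge>N. \<forall>s. 1 - real K < Re s \<longrightarrow> norm s \<le> R \<longrightarrow>
          norm (binomial_tail K s n) \<le> C * real (Suc n) powr (1 - real K - 1 - Re s)" for R :: real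
  proof (intro exI allI impI)
    fix n :: nat and s :: complex
    assume n: "nat \<lceil>2 * (R + 2)\<rceil> \<le> n" and s: "norm s \<le> R"
    have B: "norm (1 - s) + 1 \<le> R + 2"
      using s norm_triangle_ineq4[of 1 s] by simp
    have "2 * (R + 2) \<le> real (nat \<lceil>2 * (R + 2)\<rceil>)"
      by (rule real_nat_ceiling_ge)
    also have "\<dots> \<le> real n"
      using n by simp
    finally have "2 * (norm (1 - s) + 1) \<le> real (Suc n)"
      using B by simp
    then have "norm (binomial_tail K s n) \<le> 2 * (norm (1 - s) + 1) ^ Suc K * real (Suc n) powr (- Re s - real K)"
      by (rule norm_binomial_tail_le)
    also have "\<dots> \<le> 2 * (R + 2) ^ Suc K * real (Suc n) powr (- Re s - real K)"
      using B by (intro mult_right_mono mult_left_mono power_mono) auto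
    also have "- Re s - real K = 1 - real K - 1 - Re s"
      by simp
    finally show "norm (binomial_tail K s n) \<le> 2 * (R + 2) ^ Suc K * real (Suc n) powr (1 - real K - 1 - Re s)" .
  qed
  note halfplane = holomorphic_on_suminf_halfplane[OF binomial_tail_holomorphic this]
  show "binomial_tail_sum K holomorphic_on {s. 1 - real K < Re s}"
    unfolding binomial_tail_sum_def[abs_def] by (rule halfplane(1))
  show "1 - real K < Re s \<Longrightarrow> summable (\<lambda>n. binomial_tail K s n)"
    by (rule halfplane(2))
qed

definition zeta_series :: "complex \<Rightarrow> complex" where
  "zeta_series s = (\<Sum>n. of_nat (Suc n) powr - s)"

lemma
  shows zeta_series_holomorphic: "zeta_series holomorphic_on {s. 1 < Re s}"
    and summable_zeta_terms: "1 < Re s \<Longrightarrow> summable (\<lambda>n. of_nat (Suc n) powr - s :: complex)"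
proof -
  have "\<forall>n\<ge>0. \<forall>s. 1 < Re s \<longrightarrow> norm s \<le> R \<longrightarrow>
          norm (of_nat (Suc n) powr - s :: complex) \<le> 1 * real (Suc n) powr (1 - 1 - Re s)" for R :: real
    unfolding norm_of_nat_Suc_powr by simp
  then have "\<exists>C N. \<forall>n\<ge>N. \<forall>s. 1 < Re s \<longrightarrow> norm s \<le> R \<longrightarrow>
               norm (of_nat (Suc n) powr - s :: complex) \<le> C * real (Suc n) powr (1 - 1 - Re s)" for R :: real
    by blast
  note halfplane = holomorphic_on_suminf_halfplane[of "\<lambda>n s. of_nat (Suc n) powr - s", OF _ this]
  show "zeta_series holomorphic_on {s. 1 < Re s}"
    unfolding zeta_series_def[abs_def] by (rule halfplane(1)) (auto intro!: holomorphic_intros)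
  show "1 < Re s \<Longrightarrow> summable (\<lambda>n. of_nat (Suc n) powr - s :: complex)"
    by (rule halfplane(2)) (auto intro!: holomorphic_intros)
qed

lemma telescoping_powr_sums:
  assumes "1 < Re s"
  shows "(\<lambda>n. of_nat (Suc n) powr (1 - s) - of_nat (n + 2) powr (1 - s)) sums (1 :: complex)"
proof -
  have "(\<lambda>n. real n powr (1 - Re s)) \<longlonglongrightarrow> 0"
    using assms by (intro tendsto_neg_powr filterlim_real_sequentially) simp
  then have "(\<lambda>n. real (Suc n) powr (1 - Re s)) \<longlonglongrightarrow> 0"
    by (rule LIMSEQ_Suc)
  then have "(\<lambda>n. norm (of_nat (Suc n) powr (1 - s) :: complex)) \<longlonglongrightarrow> 0"
    unfolding norm_of_nat_Suc_powr by simp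
  then show ?thesis
    using telescope_sums'[of "\<lambda>n. of_nat (Suc n) powr (1 - s) :: complex" 0]
    by (simp add: tendsto_norm_zero_iff)
qed

lemma gchoose_Suc_Suc_one_minus:
  fixes s :: complex
  shows "(1 - s) gchoose Suc (Suc j) = - ((1 - s) gchoose Suc j) / of_nat (j + 2) * (s + of_nat j)"
proof -
  have "(of_nat j + 2 :: complex) \<noteq> 0"
    by (metis of_nat_add of_nat_eq_0_iff of_nat_numeral zero_neq_numeral add_eq_0_iff_both_eq_0)
  then show ?thesis
    by (simp add: gbinomial_Suc_rec[of _ "Suc j"] field_simps)
qed

lemma powr_diff_eq_binomial_tail:
  "of_nat (Suc n) powr (1 - s) - of_nat (n + 2) powr (1 - s) =
     - (\<Sum>i\<le>m. ((1 - s) gchoose Suc i) * of_nat (Suc n) powr - (s + of_nat i)) - binomial_tail (Suc m) s n"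
proof -
  have "(\<Sum>k\<le>Suc m. ((1 - s) gchoose k) * of_nat (Suc n) powr (1 - s - of_nat k)) =
          of_nat (Suc n) powr (1 - s) + (\<Sum>i\<le>m. ((1 - s) gchoose Suc i) * of_nat (Suc n) powr - (s + of_nat i))"
    by (subst sum.atMost_Suc_shift) (simp add: algebra_simps)
  then show ?thesis
    unfolding binomial_tail_def by (simp add: algebra_simps)
qed

text \<open>Telescoping \<open>\<Sum>n. (n + 1) powr (1 - s) - (n + 2) powr (1 - s) = 1\<close> and expanding
  \<open>(n + 2) powr (1 - s) = (n + 1) powr (1 - s) * (1 + 1 / (n + 1)) powr (1 - s)\<close> binomially up to
  order \<open>m + 1\<close> expresses \<open>(s - 1) \<zeta>(s)\<close> through \<open>\<zeta>(s + 1), \<dots>, \<zeta>(s + m)\<close> and a remainder that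
  converges on the larger half-plane \<open>- m < Re s\<close>.\<close>

lemma zeta_series_recursion:
  assumes s: "1 < Re s"
  shows "(s - 1) * zeta_series s =
           1 - (\<Sum>j<m. ((1 - s) gchoose Suc j) / of_nat (j + 2) * ((s + of_nat j) * zeta_series (s + of_nat (Suc j))))
             + binomial_tail_sum (Suc m) s"
proof -
  define c where "c i = (1 - s) gchoose Suc i" for i
  note term_eq = powr_diff_eq_binomial_tail[of n s m for n, folded c_def]
  have "(\<lambda>n. of_nat (Suc n) powr - (s + of_nat i)) sums zeta_series (s + of_nat i)" for i
    unfolding zeta_series_def using s by (intro summable_sums summable_zeta_terms) simp
  moreover have "(\<lambda>n. binomial_tail (Suc m) s n) sums binomial_tail_sum (Suc m) s"
    unfolding binomial_tail_sum_def using s by (intro summable_sums summable_binomial_tail) simp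
  ultimately have "(\<lambda>n. - (\<Sum>i\<le>m. c i * of_nat (Suc n) powr - (s + of_nat i)) - binomial_tail (Suc m) s n)
                     sums (- (\<Sum>i\<le>m. c i * zeta_series (s + of_nat i)) - binomial_tail_sum (Suc m) s)"
    by (intro sums_diff sums_minus sums_sum sums_mult)
  moreover have "(\<lambda>n. - (\<Sum>i\<le>m. c i * of_nat (Suc n) powr - (s + of_nat i)) - binomial_tail (Suc m) s n) sums 1"
    using telescoping_powr_sums[OF s] by (simp only: term_eq)
  ultimately have one: "1 = - (\<Sum>i\<le>m. c i * zeta_series (s + of_nat i)) - binomial_tail_sum (Suc m) s"
    using sums_unique2 by blast
  have "(\<Sum>i\<le>m. c i * zeta_series (s + of_nat i)) =
          (1 - s) * zeta_series s + (\<Sum>j<m. c (Suc j) * zeta_series (s + of_nat (Suc j)))"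
    by (subst lessThan_Suc_atMost[symmetric], subst sum.lessThan_Suc_shift) (simp add: c_def)
  also have "\<dots> = (1 - s) * zeta_series s -
                    (\<Sum>j<m. ((1 - s) gchoose Suc j) / of_nat (j + 2) * ((s + of_nat j) * zeta_series (s + of_nat (Suc j))))"
    by (simp add: c_def gchoose_Suc_Suc_one_minus sum_negf mult.assoc)
  finally show ?thesis
    using one by (simp add: algebra_simps)
qed

fun zeta_cont :: "nat \<Rightarrow> complex \<Rightarrow> complex" where
  "zeta_cont 0 s = (s - 1) * zeta_series s"
| "zeta_cont (Suc m) s =
     1 - (\<Sum>j<m. ((1 - s) gchoose Suc j) / of_nat (j + 2) * zeta_cont m (s + of_nat (Suc j)))
       + binomial_tail_sum (Suc m) s"

lemma zeta_cont_eq: "1 < Re s \<Longrightarrow> zeta_cont m s = (s - 1) * zeta_series s"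
proof (induction m arbitrary: s)
  case 0
  then show ?case by simp
next
  case (Suc m)
  have "zeta_cont m (s + of_nat (Suc j)) = (s + of_nat (Suc j) - 1) * zeta_series (s + of_nat (Suc j))" for j
    using Suc by simp
  then have "zeta_cont m (s + of_nat (Suc j)) = (s + of_nat j) * zeta_series (s + of_nat (Suc j))" for j
    by simp
  then show ?case
    using zeta_series_recursion[OF Suc.prems, of m] by simp
qed

lemma gchoose_holomorphic: "f holomorphic_on S \<Longrightarrow> (\<lambda>s. f s gchoose k) holomorphic_on S"
  unfolding gbinomial_altdef_of_nat by (intro holomorphic_on_prod holomorphic_intros) auto

lemma zeta_cont_holomorphic: "zeta_cont m holomorphic_on {s. 1 - real m < Re s}"
proof (induction m)
  case 0
  then show ?case by (auto intro!: holomorphic_intros zeta_series_holomorphic)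
next
  case (Suc m)
  have "(\<lambda>s. zeta_cont m (s + of_nat (Suc j))) holomorphic_on {s. 1 - real (Suc m) < Re s}" for j
    by (rule holomorphic_on_compose_gen[OF _ Suc, unfolded o_def]) (auto intro!: holomorphic_intros)
  then show ?case
    by (auto intro!: holomorphic_intros gchoose_holomorphic binomial_tail_sum_holomorphic[THEN holomorphic_on_subset])
qed

lemma zeta_cont_cong:
  assumes "m \<le> m'" "1 - real m < Re s"
  shows "zeta_cont m s = zeta_cont m' s"
proof (rule analytic_continuation_open[of "{s. 1 < Re s}" "{s. 1 - real m < Re s}" "zeta_cont m" "zeta_cont m'"])
  show "open {s. 1 < Re s}" "open {s. 1 - real m < Re s}"
    by (rule open_halfspace_Re_gt)+
  show "{s. 1 < Re s} \<noteq> {}"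
    by (auto intro!: exI[of _ 2])
  show "connected {s. 1 - real m < Re s}"
    by (intro convex_connected convex_halfspace_Re_gt)
  show "zeta_cont m holomorphic_on {s. 1 - real m < Re s}"
    by (rule zeta_cont_holomorphic)
  show "zeta_cont m' holomorphic_on {s. 1 - real m < Re s}"
    using assms(1) by (intro holomorphic_on_subset[OF zeta_cont_holomorphic]) auto
qed (use assms(2) in \<open>auto simp: zeta_cont_eq\<close>)

text \<open>\<open>(s - 1) \<zeta>(s)\<close>, continued to the whole plane.\<close>

definition zeta_entire :: "complex \<Rightarrow> complex" where
  "zeta_entire s = zeta_cont (nat \<lfloor>1 - Re s\<rfloor> + 1) s"

lemma zeta_entire_eq_zeta_cont:
  assumes "1 - real m < Re s"
  shows "zeta_entire s = zeta_cont m s"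
proof -
  define l where "l = nat \<lfloor>1 - Re s\<rfloor> + 1"
  have l: "1 - real l < Re s"
    unfolding l_def by linarith
  have "zeta_cont l s = zeta_cont (max l m) s" "zeta_cont m s = zeta_cont (max l m) s"
    using l assms by (auto intro: zeta_cont_cong)
  then show ?thesis
    by (simp add: zeta_entire_def l_def)
qed

lemma zeta_entire_holomorphic: "zeta_entire holomorphic_on UNIV"
proof -
  have "zeta_entire holomorphic_on {s. 1 - real m < Re s}" for m
    by (rule holomorphic_transform[OF zeta_cont_holomorphic]) (simp add: zeta_entire_eq_zeta_cont)
  then have "zeta_entire holomorphic_on (\<Union>m. {s. 1 - real m < Re s})"
    by (intro holomorphic_on_UN_open open_halfspace_Re_gt)
  moreover have "x \<in> {s. 1 - real (nat \<lfloor>1 - Re x\<rfloor> + 1) < Re s}" for x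
    by simp linarith
  then have "(\<Union>m. {s. 1 - real m < Re s}) = UNIV"
    by blast
  ultimately show ?thesis by simp
qed

lemma zeta_entire_eq: "1 < Re s \<Longrightarrow> zeta_entire s = (s - 1) * zeta_series s"
  using zeta_entire_eq_zeta_cont[of 0] zeta_cont_eq by simp

lemma zeta_entire_1: "zeta_entire 1 = 1"
proof -
  have "binomial_tail 1 1 n = 0" for n
    using of_nat_neq_0[of "Suc n", where ?'a = complex] of_nat_neq_0[of n, where ?'a = complex]
    by (simp add: binomial_tail_def add.commute)
  then show ?thesis
    using zeta_entire_eq_zeta_cont[of 1 1] by (simp add: binomial_tail_sum_def)
qed

lemma infsum_dominated:
  fixes f :: "'i \<Rightarrow> complex" and w :: "'i \<Rightarrow> real"
  assumes w: "w summable_on UNIV" and le: "\<And>i. norm (f i) \<le> C * w i"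
  shows "f summable_on UNIV" and "norm (infsum f UNIV) \<le> C * infsum w UNIV"
proof -
  have Cw: "(\<lambda>i. C * w i) summable_on UNIV"
    using w by (rule summable_on_cmult_right)
  have abs: "(\<lambda>i. norm (f i)) summable_on UNIV"
    by (rule Infinite_Sum.abs_summable_on_comparison_test'[OF Cw le])
  then show "f summable_on UNIV"
    by (rule abs_summable_summable)
  have "norm (infsum f UNIV) \<le> infsum (\<lambda>i. norm (f i)) UNIV"
    using abs by (rule norm_infsum_bound)
  also have "\<dots> \<le> infsum (\<lambda>i. C * w i) UNIV"
    using abs Cw le by (intro infsum_mono) auto
  also have "\<dots> = C * infsum w UNIV"
    using w by (rule infsum_cmult_right)
  finally show "norm (infsum f UNIV) \<le> C * infsum w UNIV" .
qed

lemma infsum_split_ranges: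
  fixes f :: "'a \<Rightarrow> 'b::{topological_comm_monoid_add, t2_space}"
  assumes inj: "inj i" "inj j" and disj: "range i \<inter> range j = {}" and cover: "range i \<union> range j = UNIV"
    and sum: "(f \<circ> i) summable_on UNIV" "(f \<circ> j) summable_on UNIV"
  shows "f summable_on UNIV" and "infsum f UNIV = infsum (f \<circ> i) UNIV + infsum (f \<circ> j) UNIV"
proof -
  have "f summable_on range i" "f summable_on range j"
    using sum by (simp_all add: summable_on_reindex inj)
  then show "f summable_on UNIV" "infsum f UNIV = infsum (f \<circ> i) UNIV + infsum (f \<circ> j) UNIV"
    by (simp_all add: cover[symmetric] summable_on_Un_disjoint infsum_Un_disjoint disj infsum_reindex inj)
qed

lemma int_UNIV_split: "range int \<union> range (\<lambda>j. - int j - 1) = UNIV"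
proof -
  have "n \<in> range int \<union> range (\<lambda>j. - int j - 1)" for n :: int
  proof (cases "0 \<le> n")
    case True
    then show ?thesis by (auto intro!: image_eqI[of n int "nat n"])
  next
    case False
    then show ?thesis by (auto intro!: image_eqI[of n _ "nat (- n - 1)"])
  qed
  then show ?thesis by blast
qed

lemma infsum_int_split:
  fixes f :: "int \<Rightarrow> 'b::{topological_comm_monoid_add, t2_space}"
  assumes "(\<lambda>k. f (int k)) summable_on UNIV" "(\<lambda>j. f (- int j - 1)) summable_on UNIV"
  shows "f summable_on UNIV" and "infsum f UNIV = (\<Sum>\<^sub>\<infinity>k. f (int k)) + (\<Sum>\<^sub>\<infinity>j. f (- int j - 1))"
proof -
  have "range int \<inter> range (\<lambda>j. - int j - 1) = {}"
    by auto
  then show "f summable_on UNIV" "infsum f UNIV = (\<Sum>\<^sub>\<infinity>k. f (int k)) + (\<Sum>\<^sub>\<infinity>j. f (- int j - 1))"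
    using infsum_split_ranges[of int "\<lambda>j. - int j - 1" f] assms int_UNIV_split
    by (auto simp: inj_def o_def)
qed

lemma infsum_nat_bool_split:
  fixes f :: "nat \<times> bool \<Rightarrow> 'b::{topological_comm_monoid_add, t2_space}"
  assumes "(\<lambda>k. f (k, False)) summable_on UNIV" "(\<lambda>k. f (k, True)) summable_on UNIV"
  shows "f summable_on UNIV" and "infsum f UNIV = (\<Sum>\<^sub>\<infinity>k. f (k, False)) + (\<Sum>\<^sub>\<infinity>k. f (k, True))"
proof -
  have "range (\<lambda>k. (k, False)) \<union> range (\<lambda>k. (k, True)) = UNIV"
    by (auto simp: image_iff)
  then show "f summable_on UNIV" "infsum f UNIV = (\<Sum>\<^sub>\<infinity>k. f (k, False)) + (\<Sum>\<^sub>\<infinity>k. f (k, True))"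
    using infsum_split_ranges[of "\<lambda>k. (k, False)" "\<lambda>k. (k, True)" f] assms by (auto simp: inj_def o_def)
qed

lemma infsum_nat_eq_suminf:
  fixes f :: "nat \<Rightarrow> 'a::{topological_comm_monoid_add, t2_space}"
  assumes "f summable_on UNIV"
  shows "infsum f UNIV = suminf f"
  using has_sum_imp_sums[OF has_sum_infsum[OF assms]] by (simp add: sums_iff)

lemma infsum_eq_single:
  fixes f :: "'a \<Rightarrow> 'b::{comm_monoid_add, t2_space}"
  assumes "\<And>x. x \<noteq> a \<Longrightarrow> f x = 0"
  shows "infsum f UNIV = f a"
proof -
  have "infsum f UNIV = infsum f {a}"
    by (rule infsum_cong_neutral) (use assms in auto)
  then show ?thesis by simp
qed

section \<open>Polynomial weights and rapid decay\<close>

definition weight :: "nat \<Rightarrow> real \<Rightarrow> real" where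
  "weight p x = 1 / (1 + x) ^ p"

lemma weight_pos: "0 \<le> x \<Longrightarrow> 0 < weight p x"
  by (simp add: weight_def)

lemma weight_nonneg: "0 \<le> x \<Longrightarrow> 0 \<le> weight p x"
  by (simp add: weight_def)

lemma weight_0 [simp]: "weight 0 x = 1"
  by (simp add: weight_def)

lemma weight_le_1: "0 \<le> x \<Longrightarrow> weight p x \<le> 1"
  by (simp add: weight_def divide_le_eq one_le_power)

lemma weight_add: "weight (p + q) x = weight p x * weight q x"
  by (simp add: weight_def power_add)

lemma weight_Suc: "0 \<le> x \<Longrightarrow> (1 + x) * weight (Suc p) x = weight p x"
  by (simp add: weight_def)

lemma weight_antimono: "0 \<le> x \<Longrightarrow> x \<le> y \<Longrightarrow> weight p y \<le> weight p x"
  unfolding weight_def by (intro divide_left_mono power_mono mult_pos_pos) auto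

lemma weight_le_weight: "0 \<le> x \<Longrightarrow> p \<le> q \<Longrightarrow> weight q x \<le> weight p x"
proof -
  assume x: "0 \<le> x" and "p \<le> q"
  then obtain r where q: "q = p + r" using le_Suc_ex by blast
  have "weight p x * weight r x \<le> weight p x * 1"
    by (intro mult_left_mono weight_le_1 weight_nonneg x)
  then show ?thesis by (simp add: q weight_add)
qed

lemma weight_mult_le:
  assumes "0 \<le> a" "0 \<le> b" "0 \<le> c" "c \<le> a + b"
  shows "weight p a * weight p b \<le> weight p c"
proof -
  have "1 + c \<le> 1 + a + b + a * b"
    using assms mult_nonneg_nonneg[OF assms(1,2)] by linarith
  also have "\<dots> = (1 + a) * (1 + b)"
    by (simp add: algebra_simps)
  finally have "(1 + c) ^ p \<le> (1 + a) ^ p * (1 + b) ^ p"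
    unfolding power_mult_distrib[symmetric] by (intro power_mono) (use assms in auto)
  then show ?thesis
    using assms unfolding weight_def by (simp add: divide_simps)
qed

lemma weight_nat_powr: "weight p (real k) = real (Suc k) powr - real p"
  by (simp add: weight_def powr_minus powr_realpow add.commute divide_inverse)

lemma rapid_decay_seq_iff_weight:
  "rapid_decay_seq g \<longleftrightarrow> (\<forall>p. \<exists>C. \<forall>n. norm (g n) \<le> C * weight p \<bar>of_int n\<bar>)"
  unfolding rapid_decay_seq_def weight_def by (simp add: field_simps)

lemma rapid_decay_seqI:
  "(\<And>p. \<exists>C. \<forall>n. norm (g n) \<le> C * weight p \<bar>of_int n\<bar>) \<Longrightarrow> rapid_decay_seq g"
  unfolding rapid_decay_seq_iff_weight by blast

lemma rapid_decay_seqE: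
  assumes "rapid_decay_seq g"
  obtains C where "0 \<le> C" "\<And>n. norm (g n) \<le> C * weight p \<bar>of_int n\<bar>"
proof -
  obtain C where C: "\<And>n. norm (g n) \<le> C * weight p \<bar>of_int n\<bar>"
    using assms unfolding rapid_decay_seq_iff_weight by blast
  moreover have "0 \<le> C"
    using C[of 0] by (rule nonneg_bound_coeff) (simp add: weight_pos)
  ultimately show ?thesis using that by blast
qed

text \<open>The weighted form of rapid decay of a matrix is equivalent to the defining one because
  \<open>1 + j + k \<le> (1 + j) * (1 + k) \<le> (1 + j + k) ^ 2\<close>.\<close>

lemma rapid_decay_matI:
  assumes h: "\<And>p. \<exists>C. \<forall>j k. norm (h j k) \<le> C * weight p (real j) * weight p (real k)"
  shows "rapid_decay_mat h"
  unfolding rapid_decay_mat_def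
proof
  fix p
  obtain C where C: "\<And>j k. norm (h j k) \<le> C * weight p (real j) * weight p (real k)"
    using h by blast
  have "(1 + real j + real k) ^ p * norm (h j k) \<le> C" for j k
  proof -
    have "(1 + real j + real k) ^ p \<le> (1 + real j) ^ p * (1 + real k) ^ p"
      unfolding power_mult_distrib[symmetric] by (intro power_mono) (auto simp: algebra_simps)
    then have "(1 + real j + real k) ^ p * norm (h j k) \<le> (1 + real j) ^ p * (1 + real k) ^ p * norm (h j k)"
      by (intro mult_right_mono) auto
    also have "\<dots> \<le> C"
      using C[of j k] by (simp add: weight_def field_simps)
    finally show ?thesis .
  qed
  then show "\<exists>C. \<forall>j k. (1 + real j + real k) ^ p * norm (h j k) \<le> C" by blast
qed

lemma rapid_decay_matE:
  assumes "rapid_decay_mat h"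
  obtains C where "0 \<le> C" "\<And>j k. norm (h j k) \<le> C * weight p (real j) * weight p (real k)"
proof -
  obtain C where C: "\<And>j k. (1 + real j + real k) ^ (2 * p) * norm (h j k) \<le> C"
    using assms unfolding rapid_decay_mat_def by blast
  have bound: "norm (h j k) \<le> C * weight p (real j) * weight p (real k)" for j k
  proof -
    have "(1 + real j) * (1 + real k) \<le> (1 + real j + real k) ^ 2"
      by (simp add: power2_eq_square algebra_simps)
    then have "(1 + real j) ^ p * (1 + real k) ^ p \<le> (1 + real j + real k) ^ (2 * p)"
      unfolding power_mult power_mult_distrib[symmetric] by (intro power_mono) auto
    then have "(1 + real j) ^ p * (1 + real k) ^ p * norm (h j k) \<le> C"
      using C[of j k] by (meson mult_right_mono norm_ge_zero order_trans)
    then show ?thesis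
      by (simp add: weight_def field_simps)
  qed
  moreover have "0 \<le> C"
    using bound[of 0 0] by (intro nonneg_bound_coeff[of "h 0 0" C "weight p 0 * weight p 0"])
                           (simp_all add: weight_pos mult.assoc)
  ultimately show ?thesis using that by blast
qed

lemma rapid_decay_mat_diagonal:
  assumes "rapid_decay_mat h"
  obtains C where "\<And>k. norm (h k k) \<le> C * weight p (real k)"
proof -
  obtain C where C: "0 \<le> C" "\<And>j k. norm (h j k) \<le> C * weight p (real j) * weight p (real k)"
    using rapid_decay_matE[OF assms, where p = p] by blast
  have "norm (h k k) \<le> C * weight p (real k)" for k
  proof -
    have "C * weight p (real k) * weight p (real k) \<le> C * weight p (real k) * 1"
      using C(1) by (intro mult_left_mono weight_le_1 mult_nonneg_nonneg weight_nonneg) auto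
    then show ?thesis using C(2)[of k k] by simp
  qed
  then show ?thesis using that by blast
qed

lemma summable_on_weight_nat: "(\<lambda>k::nat. weight 2 (real k)) summable_on UNIV"
proof -
  have "summable (\<lambda>k. real (Suc k) powr - real 2)"
    by (rule summable_Suc_powr) simp
  then have "summable (\<lambda>k. norm (weight 2 (real k)))"
    by (simp add: weight_nat_powr)
  then show ?thesis
    by (rule norm_summable_imp_summable_on)
qed

lemma summable_on_weight_int: "(\<lambda>n::int. weight 2 \<bar>of_int n\<bar>) summable_on UNIV"
proof (rule infsum_int_split(1))
  show "(\<lambda>k. weight 2 \<bar>of_int (int k)\<bar>) summable_on UNIV"
    using summable_on_weight_nat by simp
  have "weight 2 \<bar>of_int (- int j - 1)\<bar> \<le> weight 2 (real j)" for j
    by (rule weight_antimono) auto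
  then show "(\<lambda>j. weight 2 \<bar>of_int (- int j - 1)\<bar>) summable_on UNIV"
    by (intro summable_on_comparison_test[OF summable_on_weight_nat]) (auto intro: weight_nonneg)
qed

lemma rapid_decay_mat_infsum:
  fixes f :: "nat \<Rightarrow> nat \<Rightarrow> 'i \<Rightarrow> complex"
  assumes w: "w summable_on UNIV"
    and bound: "\<And>p. \<exists>C. \<forall>m n i. norm (f m n i) \<le> C * weight p (real m) * weight p (real n) * w i"
  shows "f m n summable_on UNIV" and "rapid_decay_mat (\<lambda>m n. \<Sum>\<^sub>\<infinity>i. f m n i)"
proof -
  obtain C where "\<And>i. norm (f m n i) \<le> C * w i"
    using bound[of 0] by auto
  then show "f m n summable_on UNIV"
    by (rule infsum_dominated(1)[OF w])
  show "rapid_decay_mat (\<lambda>m n. \<Sum>\<^sub>\<infinity>i. f m n i)"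
  proof (rule rapid_decay_matI)
    fix p
    obtain C where C: "\<And>m n i. norm (f m n i) \<le> (C * weight p (real m) * weight p (real n)) * w i"
      using bound[of p] by blast
    have "norm (\<Sum>\<^sub>\<infinity>i. f m n i) \<le> C * infsum w UNIV * weight p (real m) * weight p (real n)" for m n
      using infsum_dominated(2)[OF w C[of m n]] by (simp add: mult_ac)
    then show "\<exists>C. \<forall>m n. norm (\<Sum>\<^sub>\<infinity>i. f m n i) \<le> C * weight p (real m) * weight p (real n)"
      by blast
  qed
qed

lemma rapid_decay_seq_infsum:
  fixes f :: "int \<Rightarrow> 'i \<Rightarrow> complex"
  assumes w: "w summable_on UNIV"
    and bound: "\<And>p. \<exists>C. \<forall>d i. norm (f d i) \<le> C * weight p \<bar>of_int d\<bar> * w i"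
  shows "f d summable_on UNIV" and "rapid_decay_seq (\<lambda>d. \<Sum>\<^sub>\<infinity>i. f d i)"
proof -
  obtain C where "\<And>i. norm (f d i) \<le> C * w i"
    using bound[of 0] by auto
  then show "f d summable_on UNIV"
    by (rule infsum_dominated(1)[OF w])
  show "rapid_decay_seq (\<lambda>d. \<Sum>\<^sub>\<infinity>i. f d i)"
  proof (rule rapid_decay_seqI)
    fix p
    obtain C where C: "\<And>d i. norm (f d i) \<le> (C * weight p \<bar>of_int d\<bar>) * w i"
      using bound[of p] by blast
    have "norm (\<Sum>\<^sub>\<infinity>i. f d i) \<le> C * infsum w UNIV * weight p \<bar>of_int d\<bar>" for d
      using infsum_dominated(2)[OF w C[of d]] by (simp add: mult_ac)
    then show "\<exists>C. \<forall>d. norm (\<Sum>\<^sub>\<infinity>i. f d i) \<le> C * weight p \<bar>of_int d\<bar>"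
      by blast
  qed
qed

lemma rapid_decay_seq_add:
  assumes g: "rapid_decay_seq g" and g': "rapid_decay_seq g'"
  shows "rapid_decay_seq (\<lambda>n. g n + g' n)"
proof (rule rapid_decay_seqI)
  fix p
  obtain C1 where C1: "\<And>n. norm (g n) \<le> C1 * weight p \<bar>of_int n\<bar>"
    using rapid_decay_seqE[OF g] by blast
  obtain C2 where C2: "\<And>n. norm (g' n) \<le> C2 * weight p \<bar>of_int n\<bar>"
    using rapid_decay_seqE[OF g'] by blast
  have "norm (g n + g' n) \<le> (C1 + C2) * weight p \<bar>of_int n\<bar>" for n
    using norm_triangle_ineq[of "g n" "g' n"] C1[of n] C2[of n] by (simp add: algebra_simps)
  then show "\<exists>C. \<forall>n. norm (g n + g' n) \<le> C * weight p \<bar>of_int n\<bar>" by blast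
qed

lemma rapid_decay_seq_cmult:
  assumes g: "rapid_decay_seq g"
  shows "rapid_decay_seq (\<lambda>n. c * g n)"
proof (rule rapid_decay_seqI)
  fix p
  obtain C where C: "\<And>n. norm (g n) \<le> C * weight p \<bar>of_int n\<bar>"
    using rapid_decay_seqE[OF g] by blast
  have "norm (c * g n) \<le> (norm c * C) * weight p \<bar>of_int n\<bar>" for n
    using mult_left_mono[OF C[of n], of "norm c"] by (simp add: norm_mult mult_ac)
  then show "\<exists>C. \<forall>n. norm (c * g n) \<le> C * weight p \<bar>of_int n\<bar>" by blast
qed

lemma rapid_decay_seq_times_index:
  assumes g: "rapid_decay_seq g"
  shows "rapid_decay_seq (\<lambda>n. of_int n * g n)"
proof (rule rapid_decay_seqI)
  fix p
  obtain C where C: "0 \<le> C" "\<And>n. norm (g n) \<le> C * weight (Suc p) \<bar>of_int n\<bar>"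
    using rapid_decay_seqE[OF g] by blast
  have "norm (of_int n * g n) \<le> C * weight p \<bar>of_int n\<bar>" for n
  proof -
    have "norm (of_int n * g n) \<le> (1 + \<bar>of_int n\<bar>) * (C * weight (Suc p) \<bar>of_int n\<bar>)"
      unfolding norm_mult by (intro mult_mono C(2)) auto
    also have "\<dots> = C * weight p \<bar>of_int n\<bar>"
      using weight_Suc[of "\<bar>of_int n\<bar>" p] by (simp add: mult_ac)
    finally show ?thesis .
  qed
  then show "\<exists>C. \<forall>n. norm (of_int n * g n) \<le> C * weight p \<bar>of_int n\<bar>" by blast
qed

lemma rapid_decay_mat_add:
  assumes h: "rapid_decay_mat h" and h': "rapid_decay_mat h'"
  shows "rapid_decay_mat (\<lambda>j k. h j k + h' j k)"
proof (rule rapid_decay_matI)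
  fix p
  obtain C1 where C1: "\<And>j k. norm (h j k) \<le> C1 * weight p (real j) * weight p (real k)"
    using rapid_decay_matE[OF h] by blast
  obtain C2 where C2: "\<And>j k. norm (h' j k) \<le> C2 * weight p (real j) * weight p (real k)"
    using rapid_decay_matE[OF h'] by blast
  have "norm (h j k + h' j k) \<le> (C1 + C2) * weight p (real j) * weight p (real k)" for j k
    using norm_triangle_ineq[of "h j k" "h' j k"] C1[of j k] C2[of j k] by (simp add: algebra_simps)
  then show "\<exists>C. \<forall>j k. norm (h j k + h' j k) \<le> C * weight p (real j) * weight p (real k)" by blast
qed

lemma rapid_decay_mat_cmult:
  assumes h: "rapid_decay_mat h"
  shows "rapid_decay_mat (\<lambda>j k. c * h j k)"
proof (rule rapid_decay_matI)
  fix p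
  obtain C where C: "\<And>j k. norm (h j k) \<le> C * weight p (real j) * weight p (real k)"
    using rapid_decay_matE[OF h] by blast
  have "norm (c * h j k) \<le> (norm c * C) * weight p (real j) * weight p (real k)" for j k
    using mult_left_mono[OF C[of j k], of "norm c"] by (simp add: norm_mult mult_ac)
  then show "\<exists>C. \<forall>j k. norm (c * h j k) \<le> C * weight p (real j) * weight p (real k)" by blast
qed

lemma rapid_decay_mat_diff:
  "rapid_decay_mat h \<Longrightarrow> rapid_decay_mat h' \<Longrightarrow> rapid_decay_mat (\<lambda>j k. h j k - h' j k)"
  using rapid_decay_mat_add[of h "\<lambda>j k. (- 1) * h' j k"] rapid_decay_mat_cmult[of h' "- 1"] by simp

lemma rapid_decay_mat_times_row:
  assumes h: "rapid_decay_mat h"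
  shows "rapid_decay_mat (\<lambda>j k. of_nat (Suc j) * h j k)"
proof (rule rapid_decay_matI)
  fix p
  obtain C where C: "0 \<le> C" "\<And>j k. norm (h j k) \<le> C * weight (Suc p) (real j) * weight (Suc p) (real k)"
    using rapid_decay_matE[OF h] by blast
  have "norm (of_nat (Suc j) * h j k) \<le> C * weight p (real j) * weight p (real k)" for j k
  proof -
    have "norm (of_nat (Suc j) * h j k) = (1 + real j) * norm (h j k)"
      unfolding norm_mult norm_of_nat by simp
    also have "\<dots> \<le> (1 + real j) * (C * weight (Suc p) (real j) * weight (Suc p) (real k))"
      by (intro mult_left_mono C(2)) auto
    also have "\<dots> = C * ((1 + real j) * weight (Suc p) (real j)) * weight (Suc p) (real k)"
      by (simp add: mult_ac)
    also have "\<dots> \<le> C * weight p (real j) * weight p (real k)"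
      using C(1) by (simp add: weight_Suc) (intro mult_left_mono weight_le_weight mult_nonneg_nonneg weight_nonneg; simp)
    finally show ?thesis .
  qed
  then show "\<exists>C. \<forall>j k. norm (of_nat (Suc j) * h j k) \<le> C * weight p (real j) * weight p (real k)" by blast
qed

lemma rapid_decay_mat_transpose:
  "rapid_decay_mat h \<Longrightarrow> rapid_decay_mat (\<lambda>j k. h k j)"
  unfolding rapid_decay_mat_def by (metis add.commute add.left_commute)

lemma rapid_decay_mat_times_col:
  assumes h: "rapid_decay_mat h"
  shows "rapid_decay_mat (\<lambda>j k. h j k * of_nat (Suc k))"
  using rapid_decay_mat_transpose[OF rapid_decay_mat_times_row[OF rapid_decay_mat_transpose[OF h]]]
  by (simp add: mult.commute)

section \<open>The algebra \<open>A\<^sup>\<infinity>\<close>\<close>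

lemma toeplitz_times_smoothing:
  assumes g: "rapid_decay_seq g" and h: "rapid_decay_mat h"
  shows "(\<lambda>k. g (int m - int k) * h k n) summable_on UNIV"
    and "rapid_decay_mat (\<lambda>m n. \<Sum>\<^sub>\<infinity>k. g (int m - int k) * h k n)"
proof -
  have "\<exists>C. \<forall>m n k. norm (g (int m - int k) * h k n) \<le> C * weight p (real m) * weight p (real n) * weight 2 (real k)" for p
  proof -
    obtain C1 where C1: "0 \<le> C1" "\<And>d. norm (g d) \<le> C1 * weight p \<bar>of_int d\<bar>"
      using rapid_decay_seqE[OF g] by blast
    obtain C2 where C2: "0 \<le> C2" "\<And>j k. norm (h j k) \<le> C2 * weight (p + 2) (real j) * weight (p + 2) (real k)"
      using rapid_decay_matE[OF h] by blast
    have "norm (g (int m - int k) * h k n) \<le> C1 * C2 * weight p (real m) * weight p (real n) * weight 2 (real k)" for m n k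
    proof -
      have "norm (g (int m - int k) * h k n) \<le> (C1 * weight p \<bar>real m - real k\<bar>) * (C2 * weight (p + 2) (real k) * weight (p + 2) (real n))"
        unfolding norm_mult using C1(2)[of "int m - int k"] C2(2)[of k n] C1(1) C2(1)
        by (intro mult_mono) (auto intro!: mult_nonneg_nonneg weight_nonneg)
      also have "\<dots> = C1 * C2 * weight 2 (real k) * ((weight p \<bar>real m - real k\<bar> * weight p (real k)) * weight (p + 2) (real n))"
        by (simp only: weight_add) (simp add: mult_ac)
      also have "\<dots> \<le> C1 * C2 * weight 2 (real k) * (weight p (real m) * weight p (real n))"
        using C1 C2 by (intro mult_left_mono mult_mono weight_mult_le weight_le_weight)
                       (auto intro!: mult_nonneg_nonneg weight_nonneg)
      finally show ?thesis by (simp add: mult_ac)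
    qed
    then show ?thesis by blast
  qed
  note rd = rapid_decay_mat_infsum[OF summable_on_weight_nat this]
  show "(\<lambda>k. g (int m - int k) * h k n) summable_on UNIV" by (rule rd(1))
  show "rapid_decay_mat (\<lambda>m n. \<Sum>\<^sub>\<infinity>k. g (int m - int k) * h k n)" by (rule rd(2))
qed

lemma smoothing_times_toeplitz:
  assumes h: "rapid_decay_mat h" and g: "rapid_decay_seq g"
  shows "(\<lambda>k. h m k * g (int k - int n)) summable_on UNIV"
    and "rapid_decay_mat (\<lambda>m n. \<Sum>\<^sub>\<infinity>k. h m k * g (int k - int n))"
proof -
  have g': "rapid_decay_seq (\<lambda>d. g (- d))"
    using g unfolding rapid_decay_seq_def by (metis abs_minus_cancel of_int_minus)
  have h': "rapid_decay_mat (\<lambda>j k. h k j)"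
    using h by (rule rapid_decay_mat_transpose)
  note tt = toeplitz_times_smoothing[OF g' h']
  show "(\<lambda>k. h m k * g (int k - int n)) summable_on UNIV"
    using tt(1)[of n m] by (simp add: mult.commute)
  show "rapid_decay_mat (\<lambda>m n. \<Sum>\<^sub>\<infinity>k. h m k * g (int k - int n))"
    using rapid_decay_mat_transpose[OF tt(2)] by (simp add: mult.commute)
qed

lemma smoothing_times_smoothing:
  assumes h: "rapid_decay_mat h" and h': "rapid_decay_mat h'"
  shows "(\<lambda>k. h m k * h' k n) summable_on UNIV"
    and "rapid_decay_mat (\<lambda>m n. \<Sum>\<^sub>\<infinity>k. h m k * h' k n)"
proof -
  have "\<exists>C. \<forall>m n k. norm (h m k * h' k n) \<le> C * weight p (real m) * weight p (real n) * weight 2 (real k)" for p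
  proof -
    obtain C1 where C1: "0 \<le> C1" "\<And>j k. norm (h j k) \<le> C1 * weight (p + 2) (real j) * weight (p + 2) (real k)"
      using rapid_decay_matE[OF h] by blast
    obtain C2 where C2: "0 \<le> C2" "\<And>j k. norm (h' j k) \<le> C2 * weight p (real j) * weight p (real k)"
      using rapid_decay_matE[OF h'] by blast
    have "norm (h m k * h' k n) \<le> C1 * C2 * weight p (real m) * weight p (real n) * weight 2 (real k)" for m n k
    proof -
      have "norm (h m k * h' k n) \<le> (C1 * weight (p + 2) (real m) * weight (p + 2) (real k)) * (C2 * weight p (real k) * weight p (real n))"
        unfolding norm_mult using C1(2)[of m k] C2(2)[of k n] C1(1) C2(1)
        by (intro mult_mono) (auto intro!: mult_nonneg_nonneg weight_nonneg)
      also have "\<dots> = C1 * C2 * ((weight (p + 2) (real m) * weight p (real n)) * (weight 2 (real k) * (weight p (real k) * weight p (real k))))"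
        by (simp only: weight_add) (simp add: mult_ac)
      also have "\<dots> \<le> C1 * C2 * ((weight p (real m) * weight p (real n)) * (weight 2 (real k) * 1))"
        using C1 C2 by (intro mult_left_mono mult_mono weight_le_weight mult_le_one weight_le_1)
                       (auto intro!: mult_nonneg_nonneg weight_nonneg)
      finally show ?thesis by (simp add: mult_ac)
    qed
    then show ?thesis by blast
  qed
  note rd = rapid_decay_mat_infsum[OF summable_on_weight_nat this]
  show "(\<lambda>k. h m k * h' k n) summable_on UNIV" by (rule rd(1))
  show "rapid_decay_mat (\<lambda>m n. \<Sum>\<^sub>\<infinity>k. h m k * h' k n)" by (rule rd(2))
qed

definition hankel :: "(int \<Rightarrow> complex) \<Rightarrow> (int \<Rightarrow> complex) \<Rightarrow> nat \<Rightarrow> nat \<Rightarrow> complex" where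
  "hankel g g' m n = (\<Sum>\<^sub>\<infinity>j. g (int m + int j + 1) * g' (- int j - 1 - int n))"

lemma hankel_rapid_decay:
  assumes g: "rapid_decay_seq g" and g': "rapid_decay_seq g'"
  shows "(\<lambda>j. g (int m + int j + 1) * g' (- int j - 1 - int n)) summable_on UNIV"
    and "rapid_decay_mat (hankel g g')"
proof -
  have "\<exists>C. \<forall>m n j. norm (g (int m + int j + 1) * g' (- int j - 1 - int n))
                     \<le> C * weight p (real m) * weight p (real n) * weight 2 (real j)" for p
  proof -
    obtain C1 where C1: "0 \<le> C1" "\<And>d. norm (g d) \<le> C1 * weight (p + 2) \<bar>of_int d\<bar>"
      using rapid_decay_seqE[OF g] by blast
    obtain C2 where C2: "0 \<le> C2" "\<And>d. norm (g' d) \<le> C2 * weight p \<bar>of_int d\<bar>"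
      using rapid_decay_seqE[OF g'] by blast
    have "norm (g (int m + int j + 1) * g' (- int j - 1 - int n))
            \<le> C1 * C2 * weight p (real m) * weight p (real n) * weight 2 (real j)" for m n j
    proof -
      have "norm (g (int m + int j + 1) * g' (- int j - 1 - int n))
              \<le> (C1 * weight (p + 2) (real m + real j + 1)) * (C2 * weight p (real j + 1 + real n))"
      proof -
        have a: "\<bar>real_of_int (int m + int j + 1)\<bar> = real m + real j + 1"
          and b: "\<bar>real_of_int (- int j - 1 - int n)\<bar> = real j + 1 + real n"
          by simp_all
        show ?thesis
          using C1(2)[of "int m + int j + 1", unfolded a] C2(2)[of "- int j - 1 - int n", unfolded b] C1(1) C2(1)
          unfolding norm_mult by (intro mult_mono) (auto intro!: mult_nonneg_nonneg weight_nonneg)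
      qed
      also have "\<dots> = C1 * C2 * ((weight p (real m + real j + 1) * weight p (real j + 1 + real n)) * weight 2 (real m + real j + 1))"
        by (simp only: weight_add) (simp add: mult_ac)
      also have "\<dots> \<le> C1 * C2 * ((weight p (real m) * weight p (real n)) * weight 2 (real j))"
        using C1 C2 by (intro mult_left_mono mult_mono weight_antimono)
                       (auto intro!: mult_nonneg_nonneg weight_nonneg)
      finally show ?thesis by (simp add: mult_ac)
    qed
    then show ?thesis by blast
  qed
  note rd = rapid_decay_mat_infsum[OF summable_on_weight_nat this]
  show "(\<lambda>j. g (int m + int j + 1) * g' (- int j - 1 - int n)) summable_on UNIV" by (rule rd(1))
  show "rapid_decay_mat (hankel g g')" using rd(2) by (simp add: hankel_def[abs_def])
qed

definition seq_conv :: "(int \<Rightarrow> complex) \<Rightarrow> (int \<Rightarrow> complex) \<Rightarrow> int \<Rightarrow> complex" where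
  "seq_conv g g' d = (\<Sum>\<^sub>\<infinity>l. g l * g' (d - l))"

lemma seq_conv_rapid_decay:
  assumes g: "rapid_decay_seq g" and g': "rapid_decay_seq g'"
  shows "(\<lambda>l. g l * g' (d - l)) summable_on UNIV"
    and "rapid_decay_seq (seq_conv g g')"
proof -
  have "\<exists>C. \<forall>d l. norm (g l * g' (d - l)) \<le> C * weight p \<bar>of_int d\<bar> * weight 2 \<bar>of_int l\<bar>" for p
  proof -
    obtain C1 where C1: "0 \<le> C1" "\<And>d. norm (g d) \<le> C1 * weight (p + 2) \<bar>of_int d\<bar>"
      using rapid_decay_seqE[OF g] by blast
    obtain C2 where C2: "0 \<le> C2" "\<And>d. norm (g' d) \<le> C2 * weight p \<bar>of_int d\<bar>"
      using rapid_decay_seqE[OF g'] by blast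
    have "norm (g l * g' (d - l)) \<le> C1 * C2 * weight p \<bar>of_int d\<bar> * weight 2 \<bar>of_int l\<bar>" for d l
    proof -
      have "norm (g l * g' (d - l)) \<le> (C1 * weight (p + 2) \<bar>of_int l\<bar>) * (C2 * weight p \<bar>of_int (d - l)\<bar>)"
        unfolding norm_mult using C1(2)[of l] C2(2)[of "d - l"] C1(1) C2(1)
        by (intro mult_mono) (auto intro!: mult_nonneg_nonneg weight_nonneg)
      also have "\<dots> = C1 * C2 * weight 2 \<bar>of_int l\<bar> * (weight p \<bar>of_int l\<bar> * weight p \<bar>of_int (d - l)\<bar>)"
        by (simp only: weight_add) (simp add: mult_ac)
      also have "\<dots> \<le> C1 * C2 * weight 2 \<bar>of_int l\<bar> * weight p \<bar>of_int d\<bar>"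
        using C1 C2 by (intro mult_left_mono weight_mult_le) (auto intro!: mult_nonneg_nonneg weight_nonneg)
      finally show ?thesis by (simp add: mult_ac)
    qed
    then show ?thesis by blast
  qed
  note rd = rapid_decay_seq_infsum[OF summable_on_weight_int this]
  show "(\<lambda>l. g l * g' (d - l)) summable_on UNIV" by (rule rd(1))
  show "rapid_decay_seq (seq_conv g g')" using rd(2) by (simp add: seq_conv_def[abs_def])
qed

text \<open>The product of two Toeplitz operators is the Toeplitz operator of the convolution, up to
  the Hankel-type correction coming from the indices \<open>k < 0\<close> missing in \<open>\<Sum>k\<in>\<nat>\<close>.\<close>

lemma toeplitz_times_toeplitz:
  assumes g: "rapid_decay_seq g" and g': "rapid_decay_seq g'"
  shows "(\<lambda>k. g (int m - int k) * g' (int k - int n)) summable_on UNIV"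
    and "(\<Sum>\<^sub>\<infinity>k. g (int m - int k) * g' (int k - int n)) = seq_conv g g' (int m - int n) - hankel g g' m n"
proof -
  define f where "f t = g (int m - t) * g' (t - int n)" for t
  have bij: "bij_betw (\<lambda>t. int m - t) UNIV UNIV"
    by (rule bij_betwI[where g = "\<lambda>l. int m - l"]) auto
  have f_eq: "f t = g (int m - t) * g' ((int m - int n) - (int m - t))" for t
    by (simp add: f_def)
  have "f summable_on UNIV"
    unfolding f_eq[abs_def] using seq_conv_rapid_decay(1)[OF g g']
    by (subst summable_on_reindex_bij_betw[OF bij, where f = "\<lambda>l. g l * g' (int m - int n - l)"])
  moreover have conv: "infsum f UNIV = seq_conv g g' (int m - int n)"
    unfolding f_eq[abs_def] seq_conv_def by (rule infsum_reindex_bij_betw[OF bij])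
  ultimately have "(\<lambda>k. f (int k)) summable_on UNIV"
    by (subst summable_on_reindex[OF inj_of_nat, symmetric, unfolded o_def])
       (rule summable_on_subset_banach, auto)
  then show "(\<lambda>k. g (int m - int k) * g' (int k - int n)) summable_on UNIV"
    by (simp add: f_def)
  have "(\<lambda>j. f (- int j - 1)) = (\<lambda>j. g (int m + int j + 1) * g' (- int j - 1 - int n))"
    by (auto simp: f_def algebra_simps)
  then have "infsum f UNIV = (\<Sum>\<^sub>\<infinity>k. f (int k)) + hankel g g' m n"
    using infsum_int_split(2)[OF \<open>(\<lambda>k. f (int k)) summable_on UNIV\<close>] hankel_rapid_decay(1)[OF g g']
    by (simp add: hankel_def)
  then show "(\<Sum>\<^sub>\<infinity>k. g (int m - int k) * g' (int k - int n)) = seq_conv g g' (int m - int n) - hankel g g' m n"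
    by (simp add: conv f_def)
qed

lemma toep_op_times_toep_op:
  assumes g: "rapid_decay_seq g" and h: "rapid_decay_mat h"
    and g': "rapid_decay_seq g'" and h': "rapid_decay_mat h'"
  shows "(\<lambda>k. toep_op g h m k * toep_op g' h' k n) summable_on UNIV"
    and "(\<Sum>\<^sub>\<infinity>k. toep_op g h m k * toep_op g' h' k n) =
           seq_conv g g' (int m - int n) +
           ((\<Sum>\<^sub>\<infinity>k. g (int m - int k) * h' k n) + (\<Sum>\<^sub>\<infinity>k. h m k * g' (int k - int n)) +
            (\<Sum>\<^sub>\<infinity>k. h m k * h' k n) - hankel g g' m n)"
proof -
  note TT = toeplitz_times_toeplitz(1)[OF g g', of m n]
    and TS = toeplitz_times_smoothing(1)[OF g h', of m n]
    and ST = smoothing_times_toeplitz(1)[OF h g', of m n]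
    and SS = smoothing_times_smoothing(1)[OF h h', of m n]
  have expand: "(\<lambda>k. toep_op g h m k * toep_op g' h' k n) =
                  (\<lambda>k. (g (int m - int k) * g' (int k - int n) + g (int m - int k) * h' k n) +
                       (h m k * g' (int k - int n) + h m k * h' k n))"
    by (auto simp: toep_op_def algebra_simps)
  show "(\<lambda>k. toep_op g h m k * toep_op g' h' k n) summable_on UNIV"
    unfolding expand by (intro summable_on_add TT TS ST SS)
  show "(\<Sum>\<^sub>\<infinity>k. toep_op g h m k * toep_op g' h' k n) =
           seq_conv g g' (int m - int n) +
           ((\<Sum>\<^sub>\<infinity>k. g (int m - int k) * h' k n) + (\<Sum>\<^sub>\<infinity>k. h m k * g' (int k - int n)) +
            (\<Sum>\<^sub>\<infinity>k. h m k * h' k n) - hankel g g' m n)"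
    unfolding expand by (simp add: infsum_add summable_on_add TT TS ST SS toeplitz_times_toeplitz(2)[OF g g'])
qed

lemma Ainf_mult:
  assumes "A \<in> Ainf" "B \<in> Ainf"
  shows "(\<lambda>k. A m k * B k n) summable_on UNIV" and "(\<lambda>m n. \<Sum>\<^sub>\<infinity>k. A m k * B k n) \<in> Ainf"
proof -
  obtain g h where g: "rapid_decay_seq g" and h: "rapid_decay_mat h" and A: "A = toep_op g h"
    using assms(1) unfolding Ainf_def by blast
  obtain g' h' where g': "rapid_decay_seq g'" and h': "rapid_decay_mat h'" and B: "B = toep_op g' h'"
    using assms(2) unfolding Ainf_def by blast
  show "(\<lambda>k. A m k * B k n) summable_on UNIV"
    unfolding A B by (rule toep_op_times_toep_op(1)[OF g h g' h'])
  define H where "H m n = (\<Sum>\<^sub>\<infinity>k. g (int m - int k) * h' k n) + (\<Sum>\<^sub>\<infinity>k. h m k * g' (int k - int n)) +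
                            (\<Sum>\<^sub>\<infinity>k. h m k * h' k n) - hankel g g' m n" for m n
  have "rapid_decay_mat H"
    unfolding H_def
    by (intro rapid_decay_mat_diff rapid_decay_mat_add toeplitz_times_smoothing(2)[OF g h']
          smoothing_times_toeplitz(2)[OF h g'] smoothing_times_smoothing(2)[OF h h'] hankel_rapid_decay(2)[OF g g'])
  moreover have "(\<lambda>m n. \<Sum>\<^sub>\<infinity>k. A m k * B k n) = toep_op (seq_conv g g') H"
    unfolding A B toep_op_times_toep_op(2)[OF g h g' h'] by (simp add: toep_op_def H_def)
  ultimately show "(\<lambda>m n. \<Sum>\<^sub>\<infinity>k. A m k * B k n) \<in> Ainf"
    unfolding Ainf_def using seq_conv_rapid_decay(2)[OF g g'] by blast
qed

lemma Ainf_add: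
  assumes "A \<in> Ainf" "B \<in> Ainf"
  shows "(\<lambda>m n. A m n + B m n) \<in> Ainf"
proof -
  obtain g h where g: "rapid_decay_seq g" and h: "rapid_decay_mat h" and A: "A = toep_op g h"
    using assms(1) unfolding Ainf_def by blast
  obtain g' h' where g': "rapid_decay_seq g'" and h': "rapid_decay_mat h'" and B: "B = toep_op g' h'"
    using assms(2) unfolding Ainf_def by blast
  have "(\<lambda>m n. A m n + B m n) = toep_op (\<lambda>n. g n + g' n) (\<lambda>m n. h m n + h' m n)"
    by (auto simp: A B toep_op_def algebra_simps)
  then show ?thesis
    unfolding Ainf_def using rapid_decay_seq_add[OF g g'] rapid_decay_mat_add[OF h h'] by blast
qed

lemma Ainf_cmult:
  assumes "A \<in> Ainf"
  shows "(\<lambda>m n. c * A m n) \<in> Ainf"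
proof -
  obtain g h where g: "rapid_decay_seq g" and h: "rapid_decay_mat h" and A: "A = toep_op g h"
    using assms unfolding Ainf_def by blast
  have "(\<lambda>m n. c * A m n) = toep_op (\<lambda>n. c * g n) (\<lambda>m n. c * h m n)"
    by (auto simp: A toep_op_def algebra_simps)
  then show ?thesis
    unfolding Ainf_def using rapid_decay_seq_cmult[OF g] rapid_decay_mat_cmult[OF h] by blast
qed

lemma zero_in_Ainf: "(\<lambda>m n. 0) \<in> Ainf"
proof -
  have "rapid_decay_seq (\<lambda>_. 0)" "rapid_decay_mat (\<lambda>_ _. 0)"
    by (auto simp: rapid_decay_seq_def rapid_decay_mat_def)
  moreover have "(\<lambda>m n. 0) = toep_op (\<lambda>_. 0) (\<lambda>_ _. 0)"
    by (simp add: toep_op_def)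
  ultimately show ?thesis
    unfolding Ainf_def by blast
qed

text \<open>Since both Toeplitz parts have the coefficients \<open>g\<close>, they combine into the Toeplitz
  operator with coefficients \<open>d * g d\<close>, which still decay rapidly.\<close>

lemma number_op_commutator_in_Ainf:
  assumes g: "rapid_decay_seq g" and h: "rapid_decay_mat h" and h': "rapid_decay_mat h'"
  shows "(\<lambda>m n. of_nat (Suc m) * toep_op g h' m n - toep_op g h m n * of_nat (Suc n)) \<in> Ainf"
proof -
  have "(\<lambda>m n. of_nat (Suc m) * toep_op g h' m n - toep_op g h m n * of_nat (Suc n)) =
          toep_op (\<lambda>d. of_int d * g d) (\<lambda>m n. of_nat (Suc m) * h' m n - h m n * of_nat (Suc n))"
    by (auto simp: toep_op_def algebra_simps)
  moreover have "rapid_decay_mat (\<lambda>m n. of_nat (Suc m) * h' m n - h m n * of_nat (Suc n))"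
    by (intro rapid_decay_mat_diff rapid_decay_mat_times_row rapid_decay_mat_times_col h h')
  ultimately show ?thesis
    unfolding Ainf_def using rapid_decay_seq_times_index[OF g] by blast
qed

lemma has_integral_cis_int:
  fixes j :: int
  shows "((\<lambda>t. cis (of_int j * t)) has_integral (if j = 0 then complex_of_real (2 * pi) else 0)) {0..2 * pi}"
proof (cases "j = 0")
  case True
  then show ?thesis
    using has_integral_const_real[of "1 :: complex" 0 "2 * pi"] by (simp add: scaleR_conv_of_real)
next
  case False
  define E where "E z = exp (\<i> * of_int j * z) / (\<i> * of_int j)" for z :: complex
  have "((\<lambda>t. E (of_real t)) has_vector_derivative cis (of_int j * t)) (at t within {0..2 * pi})" for t
  proof (rule has_vector_derivative_real_field)
    have "(E has_field_derivative (\<i> * of_int j) * exp (\<i> * of_int j * of_real t) / (\<i> * of_int j)) (at (of_real t))"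
      unfolding E_def by (auto intro!: derivative_eq_intros)
    then show "(E has_field_derivative cis (of_int j * t)) (at (of_real t))"
      using False by (simp add: cis_conv_exp mult_ac)
  qed
  then have "((\<lambda>t. cis (of_int j * t)) has_integral (E (of_real (2 * pi)) - E (of_real 0))) {0..2 * pi}"
    by (intro fundamental_theorem_of_calculus) auto
  moreover have "exp (\<i> * of_int j * of_real (2 * pi)) = cis (2 * pi * of_int j)"
    by (simp add: cis_conv_exp mult_ac)
  then have "E (of_real (2 * pi)) - E (of_real 0) = 0"
    by (simp add: E_def cis_multiple_2pi)
  ultimately show ?thesis
    using False by simp
qed

lemma has_integral_suminf_dominated:
  fixes u :: "nat \<Rightarrow> real \<Rightarrow> 'a::banach"
  assumes M: "summable M" and le: "\<And>k t. t \<in> {a..b} \<Longrightarrow> norm (u k t) \<le> M k"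
    and cont: "\<And>k. continuous_on {a..b} (u k)" and int: "\<And>k. (u k has_integral c k) {a..b}"
  shows "((\<lambda>t. \<Sum>k. u k t) has_integral (\<Sum>k. c k)) {a..b}"
proof -
  have "uniform_limit {a..b} (\<lambda>N t. \<Sum>k<N. u k t) (\<lambda>t. \<Sum>k. u k t) sequentially"
    using le M by (rule Weierstrass_m_test)
  then obtain I J where I: "\<And>N. ((\<lambda>t. \<Sum>k<N. u k t) has_integral I N) {a..b}"
    and J: "((\<lambda>t. \<Sum>k. u k t) has_integral J) {a..b}" and IJ: "I \<longlonglongrightarrow> J"
    by (rule uniform_limit_integral) (auto intro!: continuous_on_sum cont)
  have "I N = (\<Sum>k<N. c k)" for N
    using I[of N] has_integral_sum[of "{..<N}" u c] int has_integral_unique by blast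
  then have "c sums J"
    using IJ unfolding sums_def by (metis (no_types, lifting) ext)
  then show ?thesis
    using J by (simp add: sums_unique[symmetric])
qed

lemma fourier_series_summable:
  assumes "rapid_decay_seq g"
  shows "(\<lambda>n. g n * cis (of_int n * \<theta>)) summable_on UNIV"
proof -
  obtain C where "\<And>n. norm (g n) \<le> C * weight 2 \<bar>of_int n\<bar>"
    using rapid_decay_seqE[OF assms] by blast
  then show ?thesis
    by (intro infsum_dominated(1)[OF summable_on_weight_int]) (simp add: norm_mult)
qed

lemma infsum_int_eq_suminf_int_decode:
  fixes f :: "int \<Rightarrow> 'a::{topological_comm_monoid_add, t2_space}"
  assumes "f summable_on UNIV"
  shows "summable (\<lambda>k. f (int_decode k))" and "infsum f UNIV = (\<Sum>k. f (int_decode k))"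
proof -
  have "(\<lambda>k. f (int_decode k)) summable_on UNIV"
    using assms by (simp add: summable_on_reindex_bij_betw[OF bij_int_decode])
  then show "summable (\<lambda>k. f (int_decode k))"
    by (rule summable_on_imp_summable)
  have "infsum f UNIV = (\<Sum>\<^sub>\<infinity>k. f (int_decode k))"
    by (rule infsum_reindex_bij_betw[OF bij_int_decode, symmetric])
  also have "\<dots> = (\<Sum>k. f (int_decode k))"
    using \<open>(\<lambda>k. f (int_decode k)) summable_on UNIV\<close> by (rule infsum_nat_eq_suminf)
  finally show "infsum f UNIV = (\<Sum>k. f (int_decode k))" .
qed

text \<open>Term-by-term integration, after enumerating \<open>\<int>\<close> by \<^const>\<open>int_decode\<close>.\<close>

lemma fourier_coefficient:
  assumes g: "rapid_decay_seq g"
  shows "((\<lambda>\<theta>. (\<Sum>\<^sub>\<infinity>n. g n * cis (of_int n * \<theta>)) * cis (- (of_int m * \<theta>)))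
           has_integral (complex_of_real (2 * pi) * g m)) {0..2 * pi}"
proof -
  obtain C where C: "\<And>n. norm (g n) \<le> C * weight 2 \<bar>of_int n\<bar>"
    using rapid_decay_seqE[OF g] by blast
  define u where "u k \<theta> = g (int_decode k) * cis (of_int (int_decode k - m) * \<theta>)" for k \<theta>
  define c where "c k = (if int_decode k = m then complex_of_real (2 * pi) * g m else 0)" for k
  have M: "summable (\<lambda>k. C * weight 2 \<bar>of_int (int_decode k)\<bar>)"
    by (rule infsum_int_eq_suminf_int_decode(1)[OF summable_on_cmult_right[OF summable_on_weight_int]])
  have le: "norm (u k \<theta>) \<le> C * weight 2 \<bar>of_int (int_decode k)\<bar>" for k \<theta>
    using C by (simp add: u_def norm_mult)
  have cont: "continuous_on {0..2 * pi} (u k)" for k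
    unfolding u_def by (intro continuous_intros)
  have int: "(u k has_integral c k) {0..2 * pi}" for k
    unfolding u_def c_def using has_integral_mult_right[OF has_integral_cis_int[of "int_decode k - m"]]
    by (auto simp: mult.commute)
  have "c = (\<lambda>k. if k = int_encode m then complex_of_real (2 * pi) * g m else 0)"
    unfolding c_def by (metis int_decode_inverse int_encode_inverse)
  then have "(\<Sum>k. c k) = complex_of_real (2 * pi) * g m"
    using sums_single[of "int_encode m" "\<lambda>_. complex_of_real (2 * pi) * g m"] sums_unique by metis
  moreover have "(\<Sum>\<^sub>\<infinity>n. g n * cis (of_int n * \<theta>)) * cis (- (of_int m * \<theta>)) = (\<Sum>k. u k \<theta>)" for \<theta>
  proof -
    have "(\<lambda>n. g n * cis (of_int (n - m) * \<theta>)) summable_on UNIV"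
      using summable_on_cmult_left[OF fourier_series_summable[OF g, of \<theta>], of "cis (- (of_int m * \<theta>))"]
      by (simp add: mult.assoc cis_mult algebra_simps)
    then have "(\<Sum>\<^sub>\<infinity>n. g n * cis (of_int (n - m) * \<theta>)) = (\<Sum>k. u k \<theta>)"
      unfolding u_def by (rule infsum_int_eq_suminf_int_decode(2))
    then show ?thesis
      by (subst infsum_cmult_left'[symmetric]) (simp add: mult.assoc cis_mult algebra_simps)
  qed
  ultimately show ?thesis
    using has_integral_suminf_dominated[OF M le cont int] by simp
qed

lemma rapid_decay_mat_tendsto_0:
  assumes "rapid_decay_mat h"
  shows "(\<lambda>N. h (N + i) (N + j)) \<longlonglongrightarrow> 0"
proof -
  obtain C where C: "0 \<le> C" "\<And>j k. norm (h j k) \<le> C * weight 1 (real j) * weight 1 (real k)"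
    using rapid_decay_matE[OF assms] by blast
  have "norm (h (N + i) (N + j)) \<le> C / real (Suc N)" for N
  proof -
    have "norm (h (N + i) (N + j)) \<le> C * weight 1 (real N) * 1"
      using C(2)[of "N + i" "N + j"] C(1)
      by (elim order_trans, intro mult_mono mult_left_mono weight_antimono weight_le_1)
         (auto intro!: mult_nonneg_nonneg weight_nonneg)
    then show ?thesis
      by (simp add: weight_def)
  qed
  then have "\<forall>\<^sub>F N in sequentially. norm (h (N + i) (N + j)) \<le> C / real (Suc N)"
    by (intro always_eventually allI)
  moreover have "(\<lambda>N. C / real (Suc N)) \<longlonglongrightarrow> 0"
    using LIMSEQ_Suc[OF lim_const_over_n[of C]] by simp
  ultimately show ?thesis
    by (rule Lim_null_comparison)
qed

text \<open>The Toeplitz coefficients are recovered from the entries far out along a diagonal,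
  where the smoothing part has decayed.\<close>

lemma toep_op_unique:
  assumes h: "rapid_decay_mat h" and h': "rapid_decay_mat h'" and eq: "toep_op g h = toep_op g' h'"
  shows "g = g'"
proof
  fix d
  have diff: "g d - g' d = h' (N + nat d) (N + nat (- d)) - h (N + nat d) (N + nat (- d))" for N
  proof -
    have "int (N + nat d) - int (N + nat (- d)) = d"
      by simp
    then show ?thesis
      using fun_cong[OF fun_cong[OF eq, of "N + nat d"], of "N + nat (- d)"]
      by (simp add: toep_op_def algebra_simps)
  qed
  have "(\<lambda>N. h' (N + nat d) (N + nat (- d)) - h (N + nat d) (N + nat (- d))) \<longlonglongrightarrow> 0 - 0"
    by (intro tendsto_diff rapid_decay_mat_tendsto_0 h h')
  then have "(\<lambda>N. g d - g' d) \<longlonglongrightarrow> 0"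
    by (simp only: diff[symmetric] diff_self)
  then show "g d = g' d"
    by (simp add: LIMSEQ_const_iff)
qed

lemma symb_coeffs_toep_op:
  assumes g: "rapid_decay_seq g" and h: "rapid_decay_mat h"
  shows "symb_coeffs (toep_op g h) = g"
  unfolding symb_coeffs_def
proof (rule the_equality)
  show "\<exists>h'. rapid_decay_seq g \<and> rapid_decay_mat h' \<and> toep_op g h = toep_op g h'"
    using g h by blast
  show "g' = g" if "\<exists>h'. rapid_decay_seq g' \<and> rapid_decay_mat h' \<and> toep_op g h = toep_op g' h'" for g'
    using that toep_op_unique[OF h] by metis
qed

lemma sigma_toep_op:
  assumes "rapid_decay_seq g" "rapid_decay_mat h"
  shows "sigma (toep_op g h) = (\<lambda>\<theta>. \<Sum>\<^sub>\<infinity>n. g n * cis (of_int n * \<theta>))"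
  by (auto simp: sigma_def symb_coeffs_toep_op[OF assms])

lemma sigma_has_integral:
  assumes "A \<in> Ainf"
  shows "(sigma A has_integral (complex_of_real (2 * pi) * symb_coeffs A 0)) {0..2 * pi}"
proof -
  obtain g h where g: "rapid_decay_seq g" and h: "rapid_decay_mat h" and A: "A = toep_op g h"
    using assms unfolding Ainf_def by blast
  show ?thesis
    using fourier_coefficient[OF g, of 0] unfolding A sigma_toep_op[OF g h] symb_coeffs_toep_op[OF g h]
    by simp
qed

lemma sigma_eq_imp_toeplitz_eq:
  assumes g: "rapid_decay_seq g" and h: "rapid_decay_mat h"
    and g': "rapid_decay_seq g'" and h': "rapid_decay_mat h'"
    and eq: "sigma (toep_op g h) = sigma (toep_op g' h')"
  shows "g = g'"
proof
  fix m
  have same: "(\<Sum>\<^sub>\<infinity>n. g n * cis (of_int n * \<theta>)) = (\<Sum>\<^sub>\<infinity>n. g' n * cis (of_int n * \<theta>))" for \<theta>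
    using fun_cong[OF eq, of \<theta>] unfolding sigma_toep_op[OF g h] sigma_toep_op[OF g' h'] .
  have "complex_of_real (2 * pi) * g m = complex_of_real (2 * pi) * g' m"
    by (rule has_integral_unique[OF fourier_coefficient[OF g, of m, unfolded same] fourier_coefficient[OF g', of m]])
  then show "g m = g' m"
    by simp
qed

section \<open>Block structure of \<open>B\<close>\<close>

definition Ainf_blocks :: "op2 \<Rightarrow> bool" where
  "Ainf_blocks T \<longleftrightarrow> (\<forall>a b. block T a b \<in> Ainf)"

lemma block_opmul:
  assumes "Ainf_blocks S" "Ainf_blocks T"
  shows "block (opmul S T) a b =
           (\<lambda>m n. (\<Sum>\<^sub>\<infinity>k. block S a False m k * block T False b k n) + (\<Sum>\<^sub>\<infinity>k. block S a True m k * block T True b k n))"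
proof (intro ext)
  fix m n
  have "(\<lambda>k. block S a c m k * block T c b k n) summable_on UNIV" for c
    using Ainf_mult(1) assms unfolding Ainf_blocks_def by blast
  then show "block (opmul S T) a b m n =
               (\<Sum>\<^sub>\<infinity>k. block S a False m k * block T False b k n) + (\<Sum>\<^sub>\<infinity>k. block S a True m k * block T True b k n)"
    unfolding block_def opmul_def by (intro infsum_nat_bool_split(2)) (simp_all add: block_def)
qed

lemma Ainf_blocks_opmul:
  assumes S: "Ainf_blocks S" and T: "Ainf_blocks T"
  shows "Ainf_blocks (opmul S T)"
proof -
  have prod: "(\<lambda>m n. \<Sum>\<^sub>\<infinity>k. block S a c m k * block T c b k n) \<in> Ainf" for a b c
    using Ainf_mult(2) S T unfolding Ainf_blocks_def by blast
  show ?thesis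
    unfolding Ainf_blocks_def block_opmul[OF S T] by (intro allI Ainf_add prod)
qed

lemma Ainf_blocks_add: "Ainf_blocks S \<Longrightarrow> Ainf_blocks T \<Longrightarrow> Ainf_blocks (\<lambda>i j. S i j + T i j)"
  unfolding Ainf_blocks_def block_def using Ainf_add by blast

lemma Ainf_blocks_cmult: "Ainf_blocks T \<Longrightarrow> Ainf_blocks (\<lambda>i j. c * T i j)"
  unfolding Ainf_blocks_def block_def using Ainf_cmult by blast

lemma block_diag_op: "block (diag_op x y) a b = (if a = b then (if a then y else x) else (\<lambda>m n. 0))"
  by (auto simp: block_def diag_op_def)

lemma Ainf_blocks_diag_op: "x \<in> Ainf \<Longrightarrow> y \<in> Ainf \<Longrightarrow> Ainf_blocks (diag_op x y)"
  unfolding Ainf_blocks_def block_diag_op using zero_in_Ainf by auto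

lemma Ainf_blocks_CS2q: "X \<in> CS2q \<Longrightarrow> Ainf_blocks X"
  unfolding CS2q_def using Ainf_blocks_diag_op by blast

lemma opmul_Dp_left: "opmul Dp X (m, a) (n, b) = of_nat (Suc m) * X (m, \<not> a) (n, b)"
  unfolding opmul_def by (subst infsum_eq_single[where a = "(m, \<not> a)"]) (auto simp: Dp_def split: if_splits)

lemma opmul_Dp_right: "opmul X Dp (m, a) (n, b) = X (m, a) (n, \<not> b) * of_nat (Suc n)"
  unfolding opmul_def by (subst infsum_eq_single[where a = "(n, \<not> b)"]) (auto simp: Dp_def split: if_splits)

lemma opmul_absDp_left: "opmul absDp X (m, a) (n, b) = of_nat (Suc m) * X (m, a) (n, b)"
  unfolding opmul_def by (subst infsum_eq_single[where a = "(m, a)"]) (auto simp: absDp_def split: if_splits)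

lemma opmul_absDp_right: "opmul X absDp (m, a) (n, b) = X (m, a) (n, b) * of_nat (Suc n)"
  unfolding opmul_def by (subst infsum_eq_single[where a = "(n, b)"]) (auto simp: absDp_def split: if_splits)

lemma delta_diagonal: "delta T i i = 0"
  by (cases i) (simp add: delta_def opcomm_def opmul_absDp_left opmul_absDp_right)

lemma opcomm_Dp_diag_op_diagonal: "opcomm Dp (diag_op x y) i i = 0"
  by (cases i) (simp add: opcomm_def opmul_Dp_left opmul_Dp_right diag_op_def)

text \<open>The off-diagonal blocks of \<open>[D', diag_op x y]\<close> are \<open>(N + 1) x - y (N + 1)\<close> and
  \<open>(N + 1) y - x (N + 1)\<close>; they lie in \<open>A\<^sup>\<infinity>\<close> only because \<open>x\<close> and \<open>y\<close> have the same symbol.\<close>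

lemma Ainf_blocks_opcomm_Dp:
  assumes "X \<in> CS2q"
  shows "Ainf_blocks (opcomm Dp X)"
proof -
  obtain x y where x: "x \<in> Ainf" and y: "y \<in> Ainf" and sxy: "sigma x = sigma y" and X: "X = diag_op x y"
    using assms unfolding CS2q_def by blast
  obtain g h where g: "rapid_decay_seq g" and h: "rapid_decay_mat h" and xe: "x = toep_op g h"
    using x unfolding Ainf_def by blast
  obtain g' h' where g': "rapid_decay_seq g'" and h': "rapid_decay_mat h'" and ye: "y = toep_op g' h'"
    using y unfolding Ainf_def by blast
  have "g' = g"
    using sigma_eq_imp_toeplitz_eq[OF g h g' h'] sxy xe ye by simp
  then have blocks: "block (opcomm Dp X) a b =
                       (if a = b then (\<lambda>m n. 0)
                        else if a then (\<lambda>m n. of_nat (Suc m) * toep_op g h m n - toep_op g h' m n * of_nat (Suc n))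
                        else (\<lambda>m n. of_nat (Suc m) * toep_op g h' m n - toep_op g h m n * of_nat (Suc n)))" for a b
    by (auto simp: block_def opcomm_def opmul_Dp_left opmul_Dp_right X xe ye diag_op_def)
  show ?thesis
    unfolding Ainf_blocks_def blocks
    using zero_in_Ainf number_op_commutator_in_Ainf[OF g h h'] number_op_commutator_in_Ainf[OF g h' h] by auto
qed

lemma Balg_Ainf_blocks: "T \<in> Balg \<Longrightarrow> Ainf_blocks T"
  unfolding Balg_def
proof (induction rule: alg_gen.induct)
  case (gen T)
  then show ?case
    using Ainf_blocks_CS2q Ainf_blocks_opcomm_Dp by blast
next
  case (add S T)
  from add.IH show ?case by (rule Ainf_blocks_add)
next
  case (smult T c)
  from smult.IH show ?case by (rule Ainf_blocks_cmult)
next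
  case (mult S T)
  from mult.IH show ?case by (rule Ainf_blocks_opmul)
qed

section \<open>Zeta functions and the dimension spectrum\<close>

lemma zeta_op_eq_suminf:
  assumes s: "1 < Re s" and bounded: "\<And>k a. norm (T (k, a) (k, a)) \<le> C"
  shows "zeta_op T s = (\<Sum>k. (T (k, False) (k, False) + T (k, True) (k, True)) * of_nat (Suc k) powr - s)"
proof -
  define f where "f = (\<lambda>(k, a). T (k, a) (k, a) * of_nat (Suc k) powr - s)"
  have "summable (\<lambda>k. norm (real (Suc k) powr - Re s))"
    using s summable_Suc_powr[of "- Re s"] by simp
  then have w: "(\<lambda>k. real (Suc k) powr - Re s) summable_on UNIV"
    by (rule norm_summable_imp_summable_on)
  have "norm (f (k, a)) \<le> C * real (Suc k) powr - Re s" for k a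
  proof -
    have "norm (f (k, a)) = norm (T (k, a) (k, a)) * real (Suc k) powr - Re s"
      by (simp only: f_def prod.case norm_mult norm_of_nat_Suc_powr) simp
    also have "\<dots> \<le> C * real (Suc k) powr - Re s"
      by (intro mult_right_mono bounded) simp
    finally show ?thesis .
  qed
  then have slice: "(\<lambda>k. f (k, a)) summable_on UNIV" for a
    by (rule infsum_dominated(1)[OF w])
  have "zeta_op T s = infsum f UNIV"
    unfolding zeta_op_def f_def ..
  also have "\<dots> = (\<Sum>\<^sub>\<infinity>k. f (k, False)) + (\<Sum>\<^sub>\<infinity>k. f (k, True))"
    by (rule infsum_nat_bool_split(2)[OF slice slice])
  also have "\<dots> = (\<Sum>k. f (k, False)) + (\<Sum>k. f (k, True))"
    using slice by (simp add: infsum_nat_eq_suminf)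
  also have "\<dots> = (\<Sum>k. f (k, False) + f (k, True))"
    by (intro suminf_add summable_on_imp_summable slice)
  also have "\<dots> = (\<Sum>k. (T (k, False) (k, False) + T (k, True) (k, True)) * of_nat (Suc k) powr - s)"
    by (simp add: f_def algebra_simps)
  finally show ?thesis .
qed

lemma dirichlet_series_rapid_decay:
  assumes d: "\<And>p. \<exists>C. \<forall>k. norm (d k) \<le> C * weight p (real k)"
  shows "(\<lambda>s. \<Sum>k. d k * of_nat (Suc k) powr - s) holomorphic_on UNIV"
    and "summable (\<lambda>k. d k * of_nat (Suc k) powr - s)"
proof -
  have "\<exists>C N. \<forall>k\<ge>N. \<forall>s. - real M < Re s \<longrightarrow> norm s \<le> R \<longrightarrow>
          norm (d k * of_nat (Suc k) powr - s) \<le> C * real (Suc k) powr (- real M - 1 - Re s)" for M R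
  proof -
    obtain C where C: "\<And>k. norm (d k) \<le> C * weight (Suc M) (real k)"
      using d by blast
    have "norm (d k * of_nat (Suc k) powr - s) \<le> C * real (Suc k) powr (- real M - 1 - Re s)" for k s
    proof -
      have "norm (d k * of_nat (Suc k) powr - s) \<le> C * weight (Suc M) (real k) * real (Suc k) powr - Re s"
        unfolding norm_mult norm_of_nat_Suc_powr using C by (simp add: mult_right_mono)
      also have "\<dots> = C * real (Suc k) powr (- real (Suc M) + - Re s)"
        by (simp only: weight_nat_powr powr_add mult.assoc)
      also have "- real (Suc M) + - Re s = - real M - 1 - Re s"
        by simp
      finally show ?thesis .
    qed
    then show ?thesis by blast
  qed
  note bound = this
  have hol: "(\<lambda>s. d k * of_nat (Suc k) powr - s) holomorphic_on {s. - real M < Re s}" for k M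
    by (auto intro!: holomorphic_intros)
  have level: "s \<in> {s'. - real (nat \<lceil>- Re s\<rceil> + 1) < Re s'}" for s
    by simp linarith
  have "(\<lambda>s. \<Sum>k. d k * of_nat (Suc k) powr - s) holomorphic_on (\<Union>M. {s. - real M < Re s})"
    by (intro holomorphic_on_UN_open open_halfspace_Re_gt holomorphic_on_suminf_halfplane(1)[OF hol bound])
  moreover have "(\<Union>M. {s. - real M < Re s}) = UNIV"
    using level by blast
  ultimately show "(\<lambda>s. \<Sum>k. d k * of_nat (Suc k) powr - s) holomorphic_on UNIV"
    by simp
  show "summable (\<lambda>k. d k * of_nat (Suc k) powr - s)"
    using level[of s] by (intro holomorphic_on_suminf_halfplane(2)[OF hol bound[of "nat \<lceil>- Re s\<rceil> + 1"]]) simp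
qed

lemma zeta_op_eq_zeta_plus_dirichlet:
  assumes s: "1 < Re s"
    and diag: "\<And>k. T (k, False) (k, False) + T (k, True) (k, True) = c + d k"
    and bounded: "\<And>k a. norm (T (k, a) (k, a)) \<le> C"
    and d: "\<And>p. \<exists>C. \<forall>k. norm (d k) \<le> C * weight p (real k)"
  shows "zeta_op T s = c * zeta_series s + (\<Sum>k. d k * of_nat (Suc k) powr - s)"
proof -
  have "(\<lambda>k. c * of_nat (Suc k) powr - s + d k * of_nat (Suc k) powr - s)
          sums (c * zeta_series s + (\<Sum>k. d k * of_nat (Suc k) powr - s))"
    unfolding zeta_series_def using s
    by (intro sums_add sums_mult summable_sums dirichlet_series_rapid_decay(2)[OF d] summable_zeta_terms)
  then show ?thesis
    unfolding zeta_op_eq_suminf[OF s, where T = T, OF bounded] diag by (simp add: sums_iff algebra_simps)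
qed

lemma Ainf_diagonal_bounded:
  assumes "A \<in> Ainf"
  obtains C where "\<And>k. norm (A k k) \<le> C"
proof -
  obtain g h where h: "rapid_decay_mat h" and A: "A = toep_op g h"
    using assms unfolding Ainf_def by blast
  obtain C where C: "\<And>k. norm (h k k) \<le> C * weight 0 (real k)"
    using rapid_decay_mat_diagonal[OF h] by blast
  have "norm (A k k) \<le> norm (g 0) + C" for k
    using C[of k] norm_triangle_ineq[of "g 0" "h k k"] by (simp add: A toep_op_def)
  then show ?thesis
    using that by blast
qed

text \<open>Diagonal blocks \<open>toep_op g h\<close> have diagonal entries \<open>g 0 + h k k\<close>: the constant \<open>g 0\<close>
  produces a multiple of \<open>\<zeta>\<close>, the rapidly decaying \<open>h k k\<close> an entire Dirichlet series.\<close>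

lemma zeta_op_decomposition:
  assumes A1: "block T False False \<in> Ainf" and A2: "block T True True \<in> Ainf"
  obtains H where "H holomorphic_on UNIV"
    and "\<And>s. 1 < Re s \<Longrightarrow> zeta_op T s =
           (symb_coeffs (block T False False) 0 + symb_coeffs (block T True True) 0) * zeta_series s + H s"
proof -
  obtain g1 h1 where g1: "rapid_decay_seq g1" and h1: "rapid_decay_mat h1" and B1: "block T False False = toep_op g1 h1"
    using A1 unfolding Ainf_def by blast
  obtain g2 h2 where g2: "rapid_decay_seq g2" and h2: "rapid_decay_mat h2" and B2: "block T True True = toep_op g2 h2"
    using A2 unfolding Ainf_def by blast
  define d where "d k = h1 k k + h2 k k" for k
  have diag: "T (k, False) (k, False) + T (k, True) (k, True) = (g1 0 + g2 0) + d k" for k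
    using fun_cong[OF fun_cong[OF B1, of k], of k] fun_cong[OF fun_cong[OF B2, of k], of k]
    by (simp add: block_def toep_op_def d_def)
  have d: "\<exists>C. \<forall>k. norm (d k) \<le> C * weight p (real k)" for p
  proof -
    obtain C1 where C1: "\<And>k. norm (h1 k k) \<le> C1 * weight p (real k)"
      using rapid_decay_mat_diagonal[OF h1] by blast
    obtain C2 where C2: "\<And>k. norm (h2 k k) \<le> C2 * weight p (real k)"
      using rapid_decay_mat_diagonal[OF h2] by blast
    have "norm (d k) \<le> (C1 + C2) * weight p (real k)" for k
      unfolding d_def using norm_triangle_ineq[of "h1 k k" "h2 k k"] C1[of k] C2[of k] by (simp add: algebra_simps)
    then show ?thesis by blast
  qed
  obtain C1 where C1: "\<And>k. norm (T (k, False) (k, False)) \<le> C1"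
    using Ainf_diagonal_bounded[OF A1] unfolding block_def by blast
  obtain C2 where C2: "\<And>k. norm (T (k, True) (k, True)) \<le> C2"
    using Ainf_diagonal_bounded[OF A2] unfolding block_def by blast
  have bounded: "norm (T (k, a) (k, a)) \<le> max C1 C2" for k a
    using C1[of k] C2[of k] by (cases a) (auto simp: le_max_iff_disj)
  have "g1 0 + g2 0 = symb_coeffs (block T False False) 0 + symb_coeffs (block T True True) 0"
    unfolding B1 B2 symb_coeffs_toep_op[OF g1 h1] symb_coeffs_toep_op[OF g2 h2] ..
  then show ?thesis
    using that[OF dirichlet_series_rapid_decay(1)[OF d]] zeta_op_eq_zeta_plus_dirichlet[where T = T, OF _ diag bounded d]
    by simp
qed

lemma zeta_extension:
  fixes c :: complex
  assumes H: "H holomorphic_on UNIV"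
  defines "F \<equiv> \<lambda>s. (c * zeta_entire s + (s - 1) * H s) / (s - 1)"
  shows "F meromorphic_on UNIV" and "\<And>s. 1 < Re s \<Longrightarrow> F s = c * zeta_series s + H s"
    and "\<And>z. z \<noteq> 1 \<Longrightarrow> F analytic_on {z}" and "residue F 1 = c"
proof -
  have f: "(\<lambda>s. c * zeta_entire s + (s - 1) * H s) holomorphic_on UNIV"
    by (intro holomorphic_intros zeta_entire_holomorphic H)
  then have "(\<lambda>s. c * zeta_entire s + (s - 1) * H s) analytic_on UNIV"
    by (simp add: analytic_on_open)
  then show "F meromorphic_on UNIV"
    unfolding F_def by (intro meromorphic_intros analytic_on_imp_meromorphic_on) auto
  show "F s = c * zeta_series s + H s" if "1 < Re s" for s
  proof -
    have "s \<noteq> 1" using that by auto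
    have "F s = (c * zeta_series s + H s) * (s - 1) / (s - 1)"
      unfolding F_def zeta_entire_eq[OF that] by (simp add: algebra_simps)
    then show ?thesis
      using \<open>s \<noteq> 1\<close> by simp
  qed
  show "F analytic_on {z}" if "z \<noteq> 1" for z
  proof -
    have "F holomorphic_on (UNIV - {1})"
      unfolding F_def by (intro holomorphic_intros holomorphic_on_subset[OF f]) auto
    then have "F analytic_on (UNIV - {1})"
      by (simp add: analytic_on_open open_Diff)
    then show ?thesis
      by (rule analytic_on_subset) (use that in auto)
  qed
  show "residue F 1 = c"
    unfolding F_def using residue_simple[OF open_UNIV UNIV_I f] by (simp add: zeta_entire_1)
qed

lemma diagonal_blocks_mero_ext:
  assumes "block T False False \<in> Ainf" "block T True True \<in> Ainf"
  shows "\<exists>F. mero_ext_poles_in T F {1} \<and>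
               residue F 1 = symb_coeffs (block T False False) 0 + symb_coeffs (block T True True) 0"
proof -
  obtain H where H: "H holomorphic_on UNIV" and zeta: "\<And>s. 1 < Re s \<Longrightarrow> zeta_op T s =
      (symb_coeffs (block T False False) 0 + symb_coeffs (block T True True) 0) * zeta_series s + H s"
    using zeta_op_decomposition[OF assms] by blast
  note F = zeta_extension[OF H, where c = "symb_coeffs (block T False False) 0 + symb_coeffs (block T True True) 0"]
  have "mero_ext_poles_in T (\<lambda>s. ((symb_coeffs (block T False False) 0 + symb_coeffs (block T True True) 0)
                                      * zeta_entire s + (s - 1) * H s) / (s - 1)) {1}"
    unfolding mero_ext_poles_in_def using F(1-3) zeta by auto
  then show ?thesis
    using F(4) by blast
qed

lemma mero_ext_poles_in_zero_diagonal:
  assumes "\<And>i. T i i = 0"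
  shows "mero_ext_poles_in T (\<lambda>_. 0) S"
  using assms unfolding mero_ext_poles_in_def zeta_op_def
  by (simp add: split_def analytic_on_imp_meromorphic_on)

lemma DSops_mero_ext:
  assumes "T \<in> DSops"
  shows "\<exists>F. mero_ext_poles_in T F {1}"
proof -
  obtain j G where G: "G \<in> CS2q \<union> opcomm Dp ` CS2q" and T: "T = (delta ^^ j) G"
    using assms unfolding DSops_def by blast
  show ?thesis
  proof (cases j)
    case 0
    show ?thesis
    proof (cases "G \<in> CS2q")
      case True
      then have "Ainf_blocks G"
        by (rule Ainf_blocks_CS2q)
      then show ?thesis
        using diagonal_blocks_mero_ext[of G] T 0 unfolding Ainf_blocks_def by auto
    next
      case False
      then obtain x y where "G = opcomm Dp (diag_op x y)"
        using G unfolding CS2q_def by blast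
      then have "T i i = 0" for i
        using opcomm_Dp_diag_op_diagonal T 0 by simp
      then show ?thesis
        by (blast intro: mero_ext_poles_in_zero_diagonal)
    qed
  next
    case (Suc i)
    then have "T i i = 0" for i
      using delta_diagonal T by simp
    then show ?thesis
      by (blast intro: mero_ext_poles_in_zero_diagonal)
  qed
qed

definition id_op1 :: op1 where
  "id_op1 = toep_op (\<lambda>n. if n = 0 then 1 else 0) (\<lambda>_ _. 0)"

lemma id_op1_Ainf: "id_op1 \<in> Ainf"
proof -
  have "rapid_decay_seq (\<lambda>n::int. if n = 0 then 1 else 0 :: complex)"
    by (rule rapid_decay_seqI) (auto intro!: exI[of _ 1] simp: weight_def)
  moreover have "rapid_decay_mat (\<lambda>_ _. 0)"
    by (auto simp: rapid_decay_mat_def)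
  ultimately show ?thesis
    unfolding id_op1_def Ainf_def by blast
qed

lemma zeta_op_identity:
  assumes "1 < Re s"
  shows "zeta_op (diag_op id_op1 id_op1) s = 2 * zeta_series s"
proof -
  have diag: "diag_op id_op1 id_op1 (k, a) (k, a) = 1" for k a
    by (simp add: diag_op_def id_op1_def toep_op_def)
  have "zeta_op (diag_op id_op1 id_op1) s = 2 * zeta_series s + (\<Sum>k. 0 * of_nat (Suc k) powr - s)"
    by (rule zeta_op_eq_zeta_plus_dirichlet[OF assms, where C = 1]) (auto simp: diag intro!: exI[of _ 0])
  then show ?thesis
    by simp
qed

text \<open>The identity operator already forces the pole at \<open>1\<close>: its zeta function is \<open>2 \<zeta>\<close>, so
  \<open>(s - 1) F s\<close> tends to \<open>2\<close> along the real axis, impossible if \<open>F\<close> is continuous at \<open>1\<close>.\<close>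

lemma dim_spec_admissible_contains_1:
  assumes adm: "dim_spec_admissible S"
  shows "1 \<in> S"
proof (rule ccontr)
  assume "1 \<notin> S"
  define Id where "Id = diag_op id_op1 id_op1"
  have "Id \<in> CS2q"
    unfolding Id_def CS2q_def using id_op1_Ainf by blast
  then have "Id \<in> DSops"
    unfolding DSops_def by (intro UN_I[of 0]) auto
  then obtain F where "mero_ext_poles_in Id F S"
    using adm unfolding dim_spec_admissible_def by blast
  then have F_zeta: "\<And>s. 1 < Re s \<Longrightarrow> F s = zeta_op Id s" and "F analytic_on {1}"
    using \<open>1 \<notin> S\<close> unfolding mero_ext_poles_in_def by auto
  have t: "((\<lambda>t. complex_of_real t) \<longlongrightarrow> 1) (at_right 1)"
    using tendsto_of_real[OF tendsto_ident_at[of 1 "{1<..}"]] by simp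
  have "isCont F 1"
    using \<open>F analytic_on {1}\<close> by (rule analytic_at_imp_isCont)
  have lim_F: "((\<lambda>t. F (of_real t) * (of_real t - 1)) \<longlongrightarrow> F 1 * (1 - 1)) (at_right 1)"
    using isCont_tendsto_compose[OF \<open>isCont F 1\<close> t] by (rule tendsto_mult[OF _ tendsto_diff[OF t tendsto_const]])
  have "zeta_entire analytic_on UNIV"
    using zeta_entire_holomorphic by (simp add: analytic_on_open)
  then have "isCont zeta_entire 1"
    using analytic_on_subset analytic_at_imp_isCont by blast
  have lim_zeta: "((\<lambda>t. 2 * zeta_entire (of_real t)) \<longlongrightarrow> 2 * zeta_entire 1) (at_right 1)"
    using isCont_tendsto_compose[OF \<open>isCont zeta_entire 1\<close> t] by (rule tendsto_mult[OF tendsto_const])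
  have "\<forall>\<^sub>F t in at_right 1. F (of_real t) * (of_real t - 1) = 2 * zeta_entire (of_real t)"
    using eventually_at_right_less
  proof eventually_elim
    case (elim t)
    then have "1 < Re (complex_of_real t)"
      by simp
    then show ?case
      by (simp only: F_zeta Id_def zeta_op_identity zeta_entire_eq mult_ac)
  qed
  then have "((\<lambda>t. 2 * zeta_entire (of_real t)) \<longlongrightarrow> F 1 * (1 - 1)) (at_right 1)"
    by (rule Lim_transform_eventually[OF lim_F])
  then have "F 1 * (1 - 1) = 2 * zeta_entire 1"
    using lim_zeta by (rule tendsto_unique[OF trivial_limit_at_right_real])
  then show False
    by (simp add: zeta_entire_1)
qed

lemma integral_tr_symb:
  assumes "Ainf_blocks T"
  shows "integral {0..2 * pi} (tr_symb T) =
           complex_of_real (2 * pi) * (symb_coeffs (block T False False) 0 + symb_coeffs (block T True True) 0)"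
proof -
  have "(tr_symb T has_integral complex_of_real (2 * pi) * symb_coeffs (block T False False) 0 +
                                complex_of_real (2 * pi) * symb_coeffs (block T True True) 0) {0..2 * pi}"
    using assms unfolding tr_symb_def[abs_def] Ainf_blocks_def by (intro has_integral_add sigma_has_integral) auto
  then show ?thesis
    by (simp add: integral_unique algebra_simps)
qed

theorem mainTheorem5:
  shows "is_dimension_spectrum {1} \<and>
    (\<forall>T\<in>Balg. \<exists>F. F meromorphic_on UNIV \<and> (\<forall>s. 1 < Re s \<longrightarrow> F s = zeta_op T s) \<and>
       residue F 1 = complex_of_real (1 / (2 * pi)) * integral {0..2 * pi} (tr_symb T))"
proof
  have "dim_spec_admissible {1}"
    unfolding dim_spec_admissible_def using DSops_mero_ext by auto
  then show "is_dimension_spectrum {1}"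
    unfolding is_dimension_spectrum_def using dim_spec_admissible_contains_1 by blast
  show "\<forall>T\<in>Balg. \<exists>F. F meromorphic_on UNIV \<and> (\<forall>s. 1 < Re s \<longrightarrow> F s = zeta_op T s) \<and>
          residue F 1 = complex_of_real (1 / (2 * pi)) * integral {0..2 * pi} (tr_symb T)"
  proof
    fix T assume "T \<in> Balg"
    then have T: "Ainf_blocks T"
      by (rule Balg_Ainf_blocks)
    then obtain F where F: "mero_ext_poles_in T F {1}"
      and res: "residue F 1 = symb_coeffs (block T False False) 0 + symb_coeffs (block T True True) 0"
      unfolding Ainf_blocks_def using diagonal_blocks_mero_ext by blast
    have "residue F 1 = complex_of_real (1 / (2 * pi)) * integral {0..2 * pi} (tr_symb T)"
      unfolding res integral_tr_symb[OF T] by simp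
    then show "\<exists>F. F meromorphic_on UNIV \<and> (\<forall>s. 1 < Re s \<longrightarrow> F s = zeta_op T s) \<and>
                 residue F 1 = complex_of_real (1 / (2 * pi)) * integral {0..2 * pi} (tr_symb T)"
      using F unfolding mero_ext_poles_in_def by blast
  qed
qed

end
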